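(* Let $T$ be an unmixed balanced tree of height 3. Then either $T\cong P_6$, or there exists a sequence of vertices $v_1,\dots,v_k$ such that $T\cong\mathcal{O}(P_6,(v_1,\dots,v_k))$.
   Context: For a graph, a leaf is a vertex of degree 1; the height of a vertex is its minimum distance to a leaf (isolated vertex: height 0); $V_k$ denotes the vertices of height $k$; the height of the graph is the maximum height of its vertices. A tree is balanced if no two adjacent vertices have the same height. With $N(D)=\bigcup_{v\in D}\{u: uv\in E\}$, a TD-set is $D$ with $N(D)=V$, minimal if no proper subset is a TD-set, and the graph is unmixed if all minimal TD-sets have the same size. $P_n$ is the path with vertex set $\{0,1,\dots,n\}$ and edges $\{i-1,i\}$. The operation $\mathcal{O}$: for a tree $T$ and a vertex $v$ of height $1$, $2$ or $3$ in $T$, $\mathcal{O}(T,v)$ is obtained from $T$ by adding a disjoint copy of $P_0$ and joining its vertex $0$ to $v$ if $\mathrm{height}(v)=1$; adding a disjoint copy of $P_3$ and joining its vertex $3$ to $v$ if $\mathrm{height}(v)=2$; adding a disjoint copy of $P_2$ and joining its vertex $2$ to $v$ if $\mathrm{height}(v)=3$. Iteratively, $\mathcal{O}(T,(v_1,\dots,v_n))=\mathcal{O}(\mathcal{O}(T,(v_1,\dots,v_{n-1})),v_n)$, where each $v_j$ is a vertex of height 1, 2 or 3 in $\mathcal{O}(T,(v_1,\dots,v_{j-1}))$ (new vertices relabeled to be distinct). *)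

theory Defs
  imports Main
begin

type_synonym 'a graph = "'a set \<times> 'a set set"

definition verts :: "'a graph \<Rightarrow> 'a set" where "verts G = fst G"
definition edges :: "'a graph \<Rightarrow> 'a set set" where "edges G = snd G"

definition wf_graph :: "'a graph \<Rightarrow> bool" where
  "wf_graph G \<longleftrightarrow> finite (verts G) \<and>
     (\<forall>e\<in>edges G. \<exists>u v. e = {u, v} \<and> u \<noteq> v \<and> u \<in> verts G \<and> v \<in> verts G)"

definition nbhd :: "'a graph \<Rightarrow> 'a \<Rightarrow> 'a set" where
  "nbhd G v = {u \<in> verts G. {u, v} \<in> edges G}"

definition degree :: "'a graph \<Rightarrow> 'a \<Rightarrow> nat" where
  "degree G v = card (nbhd G v)"

definition leaf :: "'a graph \<Rightarrow> 'a \<Rightarrow> bool" where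
  "leaf G v \<longleftrightarrow> v \<in> verts G \<and> degree G v = 1"

definition walk :: "'a graph \<Rightarrow> 'a list \<Rightarrow> bool" where
  "walk G xs \<longleftrightarrow> xs \<noteq> [] \<and> set xs \<subseteq> verts G \<and>
     (\<forall>i. Suc i < length xs \<longrightarrow> {xs ! i, xs ! Suc i} \<in> edges G)"

definition connected_graph :: "'a graph \<Rightarrow> bool" where
  "connected_graph G \<longleftrightarrow>
     (\<forall>u\<in>verts G. \<forall>v\<in>verts G. \<exists>xs. walk G xs \<and> hd xs = u \<and> last xs = v)"

definition has_cycle :: "'a graph \<Rightarrow> bool" where
  "has_cycle G \<longleftrightarrow> (\<exists>xs. walk G xs \<and> distinct xs \<and> length xs \<ge> 3 \<and>
      {last xs, hd xs} \<in> edges G)"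

definition is_tree :: "'a graph \<Rightarrow> bool" where
  "is_tree G \<longleftrightarrow> wf_graph G \<and> verts G \<noteq> {} \<and> connected_graph G \<and> \<not> has_cycle G"

text \<open>Height of a vertex: minimum distance (number of edges) to a leaf; 0 if no leaf is
  reachable (in particular for an isolated vertex).\<close>
definition vheight :: "'a graph \<Rightarrow> 'a \<Rightarrow> nat" where
  "vheight G v =
    (if \<exists>l xs. leaf G l \<and> walk G xs \<and> hd xs = v \<and> last xs = l
     then LEAST n. \<exists>l xs. leaf G l \<and> walk G xs \<and> hd xs = v \<and> last xs = l \<and> length xs = Suc n
     else 0)"

definition gheight :: "'a graph \<Rightarrow> nat" where
  "gheight G = Max (vheight G ` verts G)"

definition balanced_tree :: "'a graph \<Rightarrow> bool" where
  "balanced_tree G \<longleftrightarrow> is_tree G \<and>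
     (\<forall>u\<in>verts G. \<forall>v\<in>verts G. {u, v} \<in> edges G \<longrightarrow> vheight G u \<noteq> vheight G v)"

definition NS :: "'a graph \<Rightarrow> 'a set \<Rightarrow> 'a set" where
  "NS G D = (\<Union>v\<in>D. nbhd G v)"

definition TD_set :: "'a graph \<Rightarrow> 'a set \<Rightarrow> bool" where
  "TD_set G D \<longleftrightarrow> D \<subseteq> verts G \<and> NS G D = verts G"

definition minimal_TD_set :: "'a graph \<Rightarrow> 'a set \<Rightarrow> bool" where
  "minimal_TD_set G D \<longleftrightarrow> TD_set G D \<and> (\<forall>D'. D' \<subset> D \<longrightarrow> \<not> TD_set G D')"

definition unmixed :: "'a graph \<Rightarrow> bool" where
  "unmixed G \<longleftrightarrow> (\<forall>D1 D2. minimal_TD_set G D1 \<and> minimal_TD_set G D2 \<longrightarrow> card D1 = card D2)"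

definition graph_iso :: "'a graph \<Rightarrow> 'b graph \<Rightarrow> bool" where
  "graph_iso G H \<longleftrightarrow> (\<exists>f. bij_betw f (verts G) (verts H) \<and>
     (\<forall>u\<in>verts G. \<forall>v\<in>verts G. {u, v} \<in> edges G \<longleftrightarrow> {f u, f v} \<in> edges H))"

definition path_graph :: "nat \<Rightarrow> nat graph" where
  "path_graph n = ({0..n}, {{i - 1, i} | i. i \<in> {1..n}})"

text \<open>The operation O(T,v) on nat-labelled graphs; new vertices are m, m+1, ... with
  m = Max V + 1 (fresh). A copy of P_k is m..m+k with vertex i of P_k being m+i.\<close>
definition add_pendant_path :: "nat graph \<Rightarrow> nat \<Rightarrow> nat \<Rightarrow> nat graph" where
  "add_pendant_path G k v =
    (let m = Suc (Max (verts G)) in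
     (verts G \<union> {m..m+k},
      edges G \<union> {{m + i - 1, m + i} | i. i \<in> {1..k}} \<union> {{m + k, v}}))"

definition opO :: "nat graph \<Rightarrow> nat \<Rightarrow> nat graph" where
  "opO G v =
    (if vheight G v = 1 then add_pendant_path G 0 v
     else if vheight G v = 2 then add_pendant_path G 3 v
     else if vheight G v = 3 then add_pendant_path G 2 v
     else G)"

fun opO_seq :: "nat graph \<Rightarrow> nat list \<Rightarrow> nat graph" where
  "opO_seq G [] = G"
| "opO_seq G (v # vs) = opO_seq (opO G v) vs"

fun valid_O_seq :: "nat graph \<Rightarrow> nat list \<Rightarrow> bool" where
  "valid_O_seq G [] = True"
| "valid_O_seq G (v # vs) =
     (v \<in> verts G \<and> vheight G v \<in> {1, 2, 3} \<and> valid_O_seq (opO G v) vs)"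

end

theory Submission
  imports Defs
begin

text \<open>In a balanced tree of height 3 the heights of adjacent vertices differ by exactly one.
  Unmixedness forces every height-1 vertex to have at most one height-2 neighbour and every
  height-2 vertex exactly one height-1 neighbour: otherwise a minimal TD-set chosen inside a
  suitable vertex set could exchange some of its vertices for fewer ones, whereas in an unmixed
  graph minimal TD-sets are minimum. A tree of height 3 with this matching property is \<open>P\<^sub>6\<close>, or
  it has a pendant path whose removal leaves such a tree and whose reattachment is one step of
  \<open>\<O>\<close>: a second leaf at a height-1 vertex, a \<open>P\<^sub>2\<close> at a height-3 vertex of degree at least 3,
  or a \<open>P\<^sub>3\<close> at a height-2 vertex with two height-3 neighbours. Induction on the number of
  vertices concludes.\<close>

section \<open>Walks and cycles\<close>

lemma nbhd_sym: "u \<in> nbhd G v \<Longrightarrow> v \<in> verts G \<Longrightarrow> v \<in> nbhd G u"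
  by (simp add: nbhd_def insert_commute)

lemma nbhd_subset: "nbhd G v \<subseteq> verts G"
  by (auto simp: nbhd_def)

lemma wf_graph_edgeD: "wf_graph G \<Longrightarrow> {u, v} \<in> edges G \<Longrightarrow> u \<in> verts G \<and> v \<in> verts G \<and> u \<noteq> v"
  unfolding wf_graph_def by (metis doubleton_eq_iff)

lemma nbhd_irrefl: "wf_graph G \<Longrightarrow> u \<in> nbhd G v \<Longrightarrow> u \<noteq> v"
  unfolding nbhd_def using wf_graph_edgeD[of G u v] by auto

lemma nbhd_in_verts: "wf_graph G \<Longrightarrow> u \<in> nbhd G v \<Longrightarrow> v \<in> verts G"
  using wf_graph_edgeD by (fastforce simp: nbhd_def)

lemma edge_iff_nbhd: "wf_graph G \<Longrightarrow> b \<in> verts G \<Longrightarrow> {a, b} \<in> edges G \<longleftrightarrow> a \<in> nbhd G b"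
  using wf_graph_edgeD[of G a b] unfolding nbhd_def by blast

lemma finite_nbhd: "wf_graph G \<Longrightarrow> finite (nbhd G v)"
  unfolding wf_graph_def by (meson finite_subset nbhd_subset)

lemma leaf_nbhd_singleton: "leaf G l \<Longrightarrow> \<exists>s. nbhd G l = {s}"
  unfolding leaf_def degree_def by (simp add: card_1_singleton_iff)

lemma walk_single [simp]: "walk G [x] \<longleftrightarrow> x \<in> verts G"
  by (simp add: walk_def)

lemma walk_Cons_Cons [simp]:
  "walk G (x # y # xs) \<longleftrightarrow> x \<in> verts G \<and> {x, y} \<in> edges G \<and> walk G (y # xs)"
proof
  assume w: "walk G (x # y # xs)"
  then have "{x, y} \<in> edges G"
    unfolding walk_def by (metis Suc_less_eq length_Cons nth_Cons_0 nth_Cons_Suc zero_less_Suc)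
  moreover have "walk G (y # xs)" using w unfolding walk_def
    by (metis (no_types, lifting) Suc_less_eq length_Cons list.discI nth_Cons_Suc set_subset_Cons subset_trans)
  ultimately show "x \<in> verts G \<and> {x, y} \<in> edges G \<and> walk G (y # xs)"
    using w by (simp add: walk_def)
next
  assume a: "x \<in> verts G \<and> {x, y} \<in> edges G \<and> walk G (y # xs)"
  show "walk G (x # y # xs)" unfolding walk_def
  proof (intro conjI allI impI)
    show "set (x # y # xs) \<subseteq> verts G" using a by (simp add: walk_def)
    fix i assume "Suc i < length (x # y # xs)"
    then show "{(x # y # xs) ! i, (x # y # xs) ! Suc i} \<in> edges G"
      using a unfolding walk_def by (cases i) auto
  qed simp
qed

lemma walk_Cons: "walk G (x # xs) \<longleftrightarrow> x \<in> verts G \<and> (xs = [] \<or> {x, hd xs} \<in> edges G \<and> walk G xs)"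
  by (cases xs) auto

lemma walk_nonempty: "walk G xs \<Longrightarrow> xs \<noteq> []"
  by (simp add: walk_def)

lemma walk_nth_verts: "walk G xs \<Longrightarrow> i < length xs \<Longrightarrow> xs ! i \<in> verts G"
  unfolding walk_def using nth_mem by blast

lemma walk_hd_verts: "walk G xs \<Longrightarrow> hd xs \<in> verts G"
  using walk_nth_verts[of G xs 0] walk_nonempty[of G xs] by (simp add: hd_conv_nth)

lemma walk_snoc: "walk G xs \<Longrightarrow> w \<in> verts G \<Longrightarrow> {last xs, w} \<in> edges G \<Longrightarrow> walk G (xs @ [w])"
proof (induction xs rule: induct_list012)
  case (3 x y zs)
  then show ?case by simp
qed (auto simp: walk_def)

lemma walk_take: "walk G xs \<Longrightarrow> 0 < n \<Longrightarrow> walk G (take n xs)"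
  unfolding walk_def by (simp add: subset_trans[OF set_take_subset])

lemma walk_drop: "walk G xs \<Longrightarrow> n < length xs \<Longrightarrow> walk G (drop n xs)"
  unfolding walk_def by (simp add: subset_trans[OF set_drop_subset])

inductive reach_avoiding :: "'a graph \<Rightarrow> 'a \<Rightarrow> 'a \<Rightarrow> 'a \<Rightarrow> bool" for G y where
  refl: "x \<in> verts G \<Longrightarrow> x \<noteq> y \<Longrightarrow> reach_avoiding G y x x"
| step: "reach_avoiding G y x z \<Longrightarrow> w \<in> nbhd G z \<Longrightarrow> w \<noteq> y \<Longrightarrow> reach_avoiding G y x w"

lemma reach_avoiding_verts: "reach_avoiding G y a b \<Longrightarrow> a \<in> verts G \<and> b \<in> verts G \<and> a \<noteq> y \<and> b \<noteq> y"
  by (induction rule: reach_avoiding.induct) (auto simp: nbhd_def)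

lemma reach_avoiding_trans:
  assumes "reach_avoiding G y a b" "reach_avoiding G y b c" shows "reach_avoiding G y a c"
  using assms(2,1) by induction (auto intro: reach_avoiding.step)

lemma reach_avoiding_sym: "reach_avoiding G y a b \<Longrightarrow> reach_avoiding G y b a"
proof (induction rule: reach_avoiding.induct)
  case (refl x)
  then show ?case by (rule reach_avoiding.refl)
next
  case (step x z w)
  have z: "z \<in> verts G" "z \<noteq> y" using reach_avoiding_verts[OF step.hyps(1)] by auto
  have "w \<in> verts G" using step.hyps(2) by (simp add: nbhd_def)
  then have "reach_avoiding G y w z"
    using reach_avoiding.intros step.hyps(3) nbhd_sym[OF step.hyps(2) z(1)] z(2) by metis
  then show ?case using reach_avoiding_trans step.IH by metis
qed

lemma reach_avoiding_distinct_walk: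
  "reach_avoiding G y a b \<Longrightarrow> \<exists>p. walk G p \<and> distinct p \<and> hd p = a \<and> last p = b \<and> y \<notin> set p"
proof (induction rule: reach_avoiding.induct)
  case (refl x)
  then show ?case by (intro exI[of _ "[x]"]) auto
next
  case (step x z w)
  then obtain p where p: "walk G p" "distinct p" "hd p = x" "last p = z" "y \<notin> set p" by blast
  show ?case
  proof (cases "w \<in> set p")
    case True
    then obtain p1 p2 where p12: "p = p1 @ w # p2" by (meson split_list)
    then have "take (Suc (length p1)) p = p1 @ [w]" by simp
    then have "walk G (p1 @ [w])" using walk_take[OF p(1), of "Suc (length p1)"] by simp
    moreover have "hd (p1 @ [w]) = x" using p(3) p12 by (cases p1) auto
    ultimately show ?thesis using p(2,5) p12 by (intro exI[of _ "p1 @ [w]"]) simp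
  next
    case False
    have "walk G (p @ [w])"
      using walk_snoc[OF p(1)] step.hyps(2) p(4) by (auto simp: nbhd_def insert_commute)
    moreover have "hd (p @ [w]) = x" using p(3) walk_nonempty[OF p(1)] by simp
    ultimately show ?thesis using p False step.hyps(3) by (intro exI[of _ "p @ [w]"]) simp
  qed
qed

lemma has_cycle_if_reach_avoiding:
  assumes "y \<in> verts G" "a \<in> nbhd G y" "b \<in> nbhd G y" "a \<noteq> b" "reach_avoiding G y a b"
  shows "has_cycle G"
proof -
  obtain p where p: "walk G p" "distinct p" "hd p = a" "last p = b" "y \<notin> set p"
    using reach_avoiding_distinct_walk[OF assms(5)] by blast
  obtain c q where pq: "p = c # q" using walk_nonempty[OF p(1)] by (cases p) auto
  have "q \<noteq> []" using pq p(3,4) assms(4) by auto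
  have "walk G (y # p)" using p pq assms(1,2) by (auto simp: nbhd_def insert_commute)
  moreover have "length (y # p) \<ge> 3" using pq \<open>q \<noteq> []\<close> by (cases q) auto
  moreover have "{last (y # p), hd (y # p)} \<in> edges G"
    using p(1,4) assms(3) walk_nonempty[of G p] by (auto simp: nbhd_def)
  ultimately show ?thesis using p(2,5) unfolding has_cycle_def by (metis distinct.simps(2))
qed

text \<open>A longest distinct walk inside \<open>S\<close> ends at a vertex all of whose neighbours in \<open>S\<close>
  lie on the walk; one of them is not its predecessor, which closes a cycle.\<close>

lemma has_cycle_if_min_degree_two:
  assumes wf: "wf_graph G" and S: "finite S" "S \<subseteq> verts G" "S \<noteq> {}"
    and deg: "\<And>x. x \<in> S \<Longrightarrow> \<exists>a b. a \<noteq> b \<and> a \<in> nbhd G x \<inter> S \<and> b \<in> nbhd G x \<inter> S"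
  shows "has_cycle G"
proof -
  define Ps where "Ps = {p. walk G p \<and> distinct p \<and> set p \<subseteq> S}"
  have finP: "finite Ps"
    unfolding Ps_def by (rule finite_subset[OF _ finite_subset_distinct[OF S(1)]]) blast
  obtain x where "x \<in> S" using S(3) by blast
  then have "[x] \<in> Ps" using S(2) unfolding Ps_def by auto
  then have "finite (length ` Ps)" "length ` Ps \<noteq> {}" using finP by auto
  then obtain p where pP: "p \<in> Ps" and "length p = Max (length ` Ps)"
    using Max_in by (metis imageE)
  then have pmax: "length q \<le> length p" if "q \<in> Ps" for q
    using that \<open>finite (length ` Ps)\<close> by simp
  have pw: "walk G p" and pd: "distinct p" and pS: "set p \<subseteq> S" using pP unfolding Ps_def by auto
  define n where "n = length p"
  define z where "z = last p"
  have zS: "z \<in> S" using pS walk_nonempty[OF pw] z_def by auto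
  have nz: "p ! (n - 1) = z" using walk_nonempty[OF pw] unfolding n_def z_def by (simp add: last_conv_nth)
  have on_p: "c \<in> set p" if "c \<in> nbhd G z \<inter> S" for c
  proof (rule ccontr)
    assume "c \<notin> set p"
    have "walk G (p @ [c])" using walk_snoc[OF pw] that z_def by (auto simp: nbhd_def insert_commute)
    then have "p @ [c] \<in> Ps" using \<open>c \<notin> set p\<close> pd pS that unfolding Ps_def by simp
    then show False using pmax[of "p @ [c]"] by simp
  qed
  obtain a b where ab: "a \<noteq> b" "a \<in> nbhd G z \<inter> S" "b \<in> nbhd G z \<inter> S" using deg zS by blast
  obtain c where c: "c \<in> nbhd G z \<inter> S" "n \<ge> 2 \<longrightarrow> c \<noteq> p ! (n - 2)"
    using ab by (cases "n \<ge> 2 \<and> a = p ! (n - 2)") auto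
  obtain j where j: "j < n" "p ! j = c" using on_p[OF c(1)] unfolding n_def by (meson in_set_conv_nth)
  have "c \<noteq> z" using c(1) nbhd_irrefl[OF wf] by blast
  then have "j \<noteq> n - 1" using j nz by auto
  moreover have "j \<noteq> n - 2 \<or> n < 2" using c(2) j by auto
  ultimately have "j + 3 \<le> n" using j by linarith
  define q where "q = drop j p"
  have "walk G q" unfolding q_def using walk_drop[OF pw] j n_def by blast
  moreover have "distinct q" "length q \<ge> 3" unfolding q_def n_def using pd \<open>j + 3 \<le> n\<close> n_def by simp_all
  moreover have "hd q = c" "last q = z" unfolding q_def z_def using j n_def by (simp_all add: hd_drop_conv_nth)
  moreover have "{z, c} \<in> edges G" using c(1) by (simp add: nbhd_def insert_commute)
  ultimately show ?thesis unfolding has_cycle_def by metis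
qed

section \<open>Heights\<close>

definition reach_leaf :: "'a graph \<Rightarrow> 'a \<Rightarrow> nat \<Rightarrow> bool" where
  "reach_leaf G v n \<longleftrightarrow> (\<exists>l xs. leaf G l \<and> walk G xs \<and> hd xs = v \<and> last xs = l \<and> length xs = Suc n)"

lemma vheight_eq_Least:
  "vheight G v = (if \<exists>n. reach_leaf G v n then LEAST n. reach_leaf G v n else 0)"
proof -
  have "(\<exists>l xs. leaf G l \<and> walk G xs \<and> hd xs = v \<and> last xs = l) \<longleftrightarrow> (\<exists>n. reach_leaf G v n)"
    unfolding reach_leaf_def
    by (metis Suc_pred length_greater_0_conv walk_nonempty)
  then show ?thesis unfolding vheight_def reach_leaf_def by simp
qed

lemma vheight_le: "reach_leaf G v n \<Longrightarrow> vheight G v \<le> n"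
  unfolding vheight_eq_Least by (auto intro: Least_le)

lemma reach_leaf_vheight: "reach_leaf G v n \<Longrightarrow> reach_leaf G v (vheight G v)"
  unfolding vheight_eq_Least by (auto intro: LeastI)

lemma reach_leaf_in_verts: "reach_leaf G v n \<Longrightarrow> v \<in> verts G"
  unfolding reach_leaf_def using walk_hd_verts by blast

lemma reach_leaf_0_iff: "reach_leaf G v 0 \<longleftrightarrow> leaf G v"
proof
  assume "reach_leaf G v 0"
  then obtain l xs where "leaf G l" "hd xs = v" "last xs = l" "length xs = 1"
    unfolding reach_leaf_def by auto
  then show "leaf G v" by (metis One_nat_def last_ConsL length_0_conv length_Suc_conv list.sel(1))
next
  assume "leaf G v"
  then show "reach_leaf G v 0"
    unfolding reach_leaf_def by (intro exI[of _ v] exI[of _ "[v]"]) (simp add: leaf_def)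
qed

lemma reach_leaf_Cons:
  assumes wf: "wf_graph G" and y: "y \<in> nbhd G x" and r: "reach_leaf G y n"
  shows "reach_leaf G x (Suc n)"
proof -
  obtain l xs where l: "leaf G l" "walk G xs" "hd xs = y" "last xs = l" "length xs = Suc n"
    using r unfolding reach_leaf_def by blast
  have "{x, y} \<in> edges G" "x \<in> verts G"
    using y nbhd_in_verts[OF wf y] by (auto simp: nbhd_def insert_commute)
  then have "walk G (x # xs)" using l(2,3) walk_nonempty[OF l(2)] by (simp add: walk_Cons)
  then show ?thesis
    unfolding reach_leaf_def using l walk_nonempty[OF l(2)] by (intro exI[of _ l] exI[of _ "x # xs"]) simp
qed

lemma reach_leaf_SucE:
  assumes "reach_leaf G x (Suc n)"
  obtains y where "y \<in> nbhd G x" "reach_leaf G y n"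
proof -
  obtain l xs where l: "leaf G l" "walk G xs" "hd xs = x" "last xs = l" "length xs = Suc (Suc n)"
    using assms unfolding reach_leaf_def by blast
  then obtain y ys where xs: "xs = x # y # ys" by (metis length_Suc_conv list.sel(1))
  then have "{x, y} \<in> edges G" "walk G (y # ys)" using l(2) by simp_all
  moreover have "y \<in> verts G" using walk_hd_verts[OF \<open>walk G (y # ys)\<close>] by simp
  ultimately have "y \<in> nbhd G x" by (simp add: nbhd_def insert_commute)
  moreover have "reach_leaf G y n"
    unfolding reach_leaf_def using l xs \<open>walk G (y # ys)\<close> by (intro exI[of _ l] exI[of _ "y # ys"]) simp
  ultimately show thesis by (rule that)
qed

lemma reach_leaf_height_function:
  assumes wf: "wf_graph G"
    and leaf: "\<And>x. x \<in> verts G \<Longrightarrow> f x = 0 \<Longrightarrow> leaf G x"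
    and descend: "\<And>x. x \<in> verts G \<Longrightarrow> 0 < f x \<Longrightarrow> \<exists>y\<in>nbhd G x. Suc (f y) = f x"
  shows "x \<in> verts G \<Longrightarrow> reach_leaf G x (f x)"
proof (induction "f x" arbitrary: x)
  case 0
  then show ?case using leaf reach_leaf_0_iff by metis
next
  case (Suc n)
  then obtain y where y: "y \<in> nbhd G x" "Suc (f y) = f x" using descend by (metis zero_less_Suc)
  then have "reach_leaf G y n" using Suc nbhd_subset by (metis Suc_inject subsetD)
  then show ?case using reach_leaf_Cons[OF wf y(1)] Suc.hyps(2) y(2) by (metis Suc_inject)
qed

lemma height_function_le:
  assumes leaf: "\<And>x. leaf G x \<Longrightarrow> f x = 0"
    and step: "\<And>x y. y \<in> nbhd G x \<Longrightarrow> f x \<le> Suc (f y)"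
  shows "reach_leaf G x n \<Longrightarrow> f x \<le> n"
proof (induction n arbitrary: x)
  case 0
  then show ?case using leaf reach_leaf_0_iff by fastforce
next
  case (Suc n)
  obtain y where "y \<in> nbhd G x" "reach_leaf G y n" using Suc.prems by (blast elim: reach_leaf_SucE)
  then show ?case using Suc.IH step by (meson Suc_le_mono le_trans)
qed

lemma vheight_eqI:
  assumes wf: "wf_graph G"
    and leaf: "\<And>x. x \<in> verts G \<Longrightarrow> f x = 0 \<longleftrightarrow> leaf G x"
    and descend: "\<And>x. x \<in> verts G \<Longrightarrow> 0 < f x \<Longrightarrow> \<exists>y\<in>nbhd G x. Suc (f y) = f x"
    and step: "\<And>x y. y \<in> nbhd G x \<Longrightarrow> f x \<le> Suc (f y)"
    and x: "x \<in> verts G"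
  shows "vheight G x = f x"
proof -
  have r: "reach_leaf G x (f x)" using reach_leaf_height_function[OF wf _ descend x] leaf by blast
  have "f x \<le> vheight G x"
    using height_function_le[OF _ step reach_leaf_vheight[OF r]] leaf by (meson leaf_def)
  then show ?thesis using vheight_le[OF r] by simp
qed

definition iso_map :: "'a graph \<Rightarrow> 'b graph \<Rightarrow> ('a \<Rightarrow> 'b) \<Rightarrow> bool" where
  "iso_map G H f \<longleftrightarrow> bij_betw f (verts G) (verts H) \<and>
     (\<forall>u\<in>verts G. \<forall>v\<in>verts G. {u, v} \<in> edges G \<longleftrightarrow> {f u, f v} \<in> edges H)"

lemma graph_iso_iff_iso_map: "graph_iso G H \<longleftrightarrow> (\<exists>f. iso_map G H f)"
  by (simp add: graph_iso_def iso_map_def)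

lemma iso_map_inv: assumes "iso_map G H f" shows "iso_map H G (inv_into (verts G) f)"
proof -
  let ?g = "inv_into (verts G) f"
  have b: "bij_betw f (verts G) (verts H)" using assms by (simp add: iso_map_def)
  have bg: "bij_betw ?g (verts H) (verts G)" using bij_betw_inv_into[OF b] .
  have "{?g u, ?g v} \<in> edges G \<longleftrightarrow> {u, v} \<in> edges H" if "u \<in> verts H" "v \<in> verts H" for u v
  proof -
    have "?g u \<in> verts G" "?g v \<in> verts G" using bg that bij_betwE by blast+
    moreover have "f (?g u) = u" "f (?g v) = v" using b that by (meson bij_betw_inv_into_right)+
    ultimately show ?thesis using assms unfolding iso_map_def by metis
  qed
  then show ?thesis using bg unfolding iso_map_def by blast
qed

lemma iso_map_nbhd:
  assumes "iso_map G H f" "x \<in> verts G" shows "nbhd H (f x) = f ` nbhd G x"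
proof -
  have b: "bij_betw f (verts G) (verts H)"
    and e: "\<forall>u\<in>verts G. \<forall>v\<in>verts G. {u, v} \<in> edges G \<longleftrightarrow> {f u, f v} \<in> edges H"
    using assms by (auto simp: iso_map_def)
  show ?thesis
  proof
    show "nbhd H (f x) \<subseteq> f ` nbhd G x"
    proof
      fix y assume "y \<in> nbhd H (f x)"
      then have y: "y \<in> verts H" "{y, f x} \<in> edges H" by (auto simp: nbhd_def)
      then obtain u where u: "u \<in> verts G" "y = f u" using b by (metis bij_betw_imp_surj_on imageE)
      then have "{u, x} \<in> edges G" using e y assms(2) by blast
      then show "y \<in> f ` nbhd G x" using u by (auto simp: nbhd_def)
    qed
    show "f ` nbhd G x \<subseteq> nbhd H (f x)"
    proof
      fix y assume "y \<in> f ` nbhd G x"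
      then obtain u where u: "u \<in> nbhd G x" "y = f u" by blast
      then have "u \<in> verts G" "{u, x} \<in> edges G" by (auto simp: nbhd_def)
      then show "y \<in> nbhd H (f x)" using e assms(2) u b bij_betwE by (fastforce simp: nbhd_def)
    qed
  qed
qed

lemma iso_map_leaf: assumes "iso_map G H f" "x \<in> verts G" shows "leaf H (f x) \<longleftrightarrow> leaf G x"
proof -
  have b: "bij_betw f (verts G) (verts H)" using assms by (simp add: iso_map_def)
  have "inj_on f (nbhd G x)" using b nbhd_subset bij_betw_imp_inj_on inj_on_subset by metis
  then have "degree H (f x) = degree G x"
    unfolding degree_def using iso_map_nbhd[OF assms] card_image by simp
  moreover have "f x \<in> verts H" using b assms(2) bij_betwE by blast
  ultimately show ?thesis using assms(2) by (simp add: leaf_def)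
qed

lemma iso_map_walk: assumes "iso_map G H f" "walk G xs" shows "walk H (map f xs)"
  using assms(2)
proof (induction xs rule: induct_list012)
  case (2 x)
  then show ?case using assms(1) bij_betwE by (fastforce simp: iso_map_def)
next
  case (3 x y zs)
  have "y \<in> verts G" using walk_hd_verts[of G "y # zs"] 3 by simp
  then show ?case using 3 assms(1) bij_betwE by (fastforce simp: iso_map_def)
qed (simp add: walk_def)

lemma iso_map_reach_leaf:
  assumes "iso_map G H f" "reach_leaf G x n" shows "reach_leaf H (f x) n"
proof -
  obtain l xs where l: "leaf G l" "walk G xs" "hd xs = x" "last xs = l" "length xs = Suc n"
    using assms(2) unfolding reach_leaf_def by blast
  have "leaf H (f l)" using iso_map_leaf[OF assms(1)] l(1) by (simp add: leaf_def)
  moreover have "hd (map f xs) = f x" "last (map f xs) = f l"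
    using walk_nonempty[OF l(2)] l by (simp_all add: hd_map last_map)
  ultimately show ?thesis
    unfolding reach_leaf_def using l(5) iso_map_walk[OF assms(1) l(2)]
    by (intro exI[of _ "f l"] exI[of _ "map f xs"]) simp
qed

lemma iso_map_vheight:
  assumes "iso_map G H f" "x \<in> verts G" shows "vheight H (f x) = vheight G x"
proof -
  have "inv_into (verts G) f (f x) = x"
    using assms by (simp add: iso_map_def bij_betw_def inv_into_f_f)
  then have "reach_leaf H (f x) n \<longleftrightarrow> reach_leaf G x n" for n
    using iso_map_reach_leaf[OF assms(1)] iso_map_reach_leaf[OF iso_map_inv[OF assms(1)], of "f x"]
    by metis
  then have "reach_leaf H (f x) = reach_leaf G x" by blast
  then show ?thesis unfolding vheight_eq_Least by (simp only:)
qed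

lemma connected_nbhd_closed_eq:
  assumes con: "connected_graph G" and wf: "wf_graph G"
    and X: "X \<subseteq> verts G" "X \<noteq> {}" "\<And>x. x \<in> X \<Longrightarrow> nbhd G x \<subseteq> X"
  shows "X = verts G"
proof
  show "verts G \<subseteq> X"
  proof
    fix y assume y: "y \<in> verts G"
    obtain x where x: "x \<in> X" using X(2) by blast
    then obtain xs where xs: "walk G xs" "hd xs = x" "last xs = y"
      using con y X(1) unfolding connected_graph_def by blast
    have "xs ! i \<in> X" if "i < length xs" for i
      using that
    proof (induction i)
      case 0
      then show ?case using xs(2) x by (simp add: hd_conv_nth)
    next
      case (Suc i)
      have "{xs ! i, xs ! Suc i} \<in> edges G" using xs(1) Suc.prems by (simp add: walk_def)
      then have "xs ! Suc i \<in> nbhd G (xs ! i)"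
        using walk_nth_verts[OF xs(1) Suc.prems] by (simp add: nbhd_def insert_commute)
      then show ?case using X(3) Suc.IH Suc.prems by (meson Suc_lessD subsetD)
    qed
    then have "xs ! (length xs - 1) \<in> X" using walk_nonempty[OF xs(1)] by simp
    then show "y \<in> X" using xs(3) walk_nonempty[OF xs(1)] by (simp add: last_conv_nth)
  qed
qed (use X in blast)

lemma connected_reach_leaf:
  assumes wf: "wf_graph G" and con: "connected_graph G" and z: "reach_leaf G z n"
    and x: "x \<in> verts G"
  shows "\<exists>m. reach_leaf G x m"
proof -
  define R where "R = {x \<in> verts G. \<exists>m. reach_leaf G x m}"
  have "z \<in> R" using reach_leaf_in_verts[OF z] z unfolding R_def by auto
  moreover have "nbhd G y \<subseteq> R" if y: "y \<in> R" for y
  proof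
    fix w assume w: "w \<in> nbhd G y"
    obtain m where m: "reach_leaf G y m" using y unfolding R_def by auto
    have "y \<in> nbhd G w" using nbhd_sym[OF w] reach_leaf_in_verts[OF m] .
    then have "reach_leaf G w (Suc m)" using reach_leaf_Cons[OF wf _ m] by simp
    then show "w \<in> R" unfolding R_def using reach_leaf_in_verts[of G w] by auto
  qed
  moreover have "R \<subseteq> verts G" unfolding R_def by auto
  ultimately have "R = verts G" using connected_nbhd_closed_eq[OF con wf, of R] by blast
  then show ?thesis using x unfolding R_def by auto
qed

lemma vheight_le_Suc_nbr:
  "wf_graph G \<Longrightarrow> y \<in> nbhd G x \<Longrightarrow> reach_leaf G y n \<Longrightarrow> vheight G x \<le> Suc (vheight G y)"
  using reach_leaf_Cons[of G y x "vheight G y"] reach_leaf_vheight[of G y n] vheight_le[of G x] by blast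

lemma vheight_eq_0_iff_leaf: "reach_leaf G x n \<Longrightarrow> vheight G x = 0 \<longleftrightarrow> leaf G x"
  using reach_leaf_0_iff[of G x] reach_leaf_vheight[of G x n] vheight_le[of G x 0] by auto

lemma vheight_descend:
  assumes wf: "wf_graph G" and r: "reach_leaf G x n" and pos: "0 < vheight G x"
  shows "\<exists>y\<in>nbhd G x. Suc (vheight G y) = vheight G x"
proof -
  obtain m where m: "vheight G x = Suc m" using pos gr0_implies_Suc by blast
  then obtain y where y: "y \<in> nbhd G x" "reach_leaf G y m"
    using reach_leaf_vheight[OF r] by (auto elim: reach_leaf_SucE)
  then have "vheight G y \<le> m" "vheight G x \<le> Suc (vheight G y)"
    using vheight_le[of G y m] vheight_le_Suc_nbr[OF wf, of y x m] by auto
  then show ?thesis using y(1) m by (intro bexI[of _ y]) auto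
qed

section \<open>Balanced trees of height 3\<close>

locale height3_tree =
  fixes T :: "'a graph"
  assumes wf: "wf_graph T"
    and acyclic: "\<not> has_cycle T"
    and nbhd_closed_eq: "\<And>X. X \<subseteq> verts T \<Longrightarrow> X \<noteq> {} \<Longrightarrow> (\<forall>x\<in>X. nbhd T x \<subseteq> X) \<Longrightarrow> X = verts T"
    and height0_iff_leaf: "\<And>x. x \<in> verts T \<Longrightarrow> vheight T x = 0 \<longleftrightarrow> leaf T x"
    and height_descend:
      "\<And>x. x \<in> verts T \<Longrightarrow> 0 < vheight T x \<Longrightarrow> \<exists>y\<in>nbhd T x. Suc (vheight T y) = vheight T x"
    and height_nbr:
      "\<And>x y. y \<in> nbhd T x \<Longrightarrow> vheight T x = Suc (vheight T y) \<or> vheight T y = Suc (vheight T x)"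
    and height_le3: "\<And>x. x \<in> verts T \<Longrightarrow> vheight T x \<le> 3"
    and height3_exists: "\<exists>x\<in>verts T. vheight T x = 3"

lemma balanced_tree_height3_tree:
  assumes bal: "balanced_tree T" and height: "gheight T = 3"
  shows "height3_tree T"
proof -
  have wf: "wf_graph T" and ne: "verts T \<noteq> {}" and con: "connected_graph T"
    and acyclic: "\<not> has_cycle T"
    using bal unfolding balanced_tree_def is_tree_def by simp_all
  have fin: "finite (verts T)" using wf by (simp add: wf_graph_def)
  have max: "Max (vheight T ` verts T) = 3" using height by (simp add: gheight_def)
  then obtain z where z: "z \<in> verts T" "vheight T z = 3"
    using Max_in[of "vheight T ` verts T"] fin ne by auto
  then have "\<exists>n. reach_leaf T z n" unfolding vheight_eq_Least by (auto split: if_splits)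
  then have reach: "\<exists>n. reach_leaf T x n" if "x \<in> verts T" for x
    using connected_reach_leaf[OF wf con _ that] by blast
  show ?thesis
  proof
    show "X = verts T" if "X \<subseteq> verts T" "X \<noteq> {}" "\<forall>x\<in>X. nbhd T x \<subseteq> X" for X
      using connected_nbhd_closed_eq[OF con wf] that by blast
    show "vheight T x = 0 \<longleftrightarrow> leaf T x" if "x \<in> verts T" for x
      using reach[OF that] vheight_eq_0_iff_leaf by (elim exE)
    show "\<exists>y\<in>nbhd T x. Suc (vheight T y) = vheight T x" if "x \<in> verts T" "0 < vheight T x" for x
      using reach[OF that(1)] vheight_descend[OF wf _ that(2)] by blast
    show "vheight T x = Suc (vheight T y) \<or> vheight T y = Suc (vheight T x)"
      if y: "y \<in> nbhd T x" for x y
    proof -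
      have x: "x \<in> verts T" and y': "y \<in> verts T" using nbhd_in_verts[OF wf y] nbhd_subset[of T x] y by auto
      have "{x, y} \<in> edges T" using y by (simp add: nbhd_def insert_commute)
      then have "vheight T x \<noteq> vheight T y" using bal x y' unfolding balanced_tree_def by blast
      moreover have "vheight T x \<le> Suc (vheight T y)"
        using reach[OF y'] vheight_le_Suc_nbr[OF wf y] by blast
      moreover have "vheight T y \<le> Suc (vheight T x)"
        using reach[OF x] vheight_le_Suc_nbr[OF wf nbhd_sym[OF y x]] by blast
      ultimately show ?thesis by linarith
    qed
    show "vheight T x \<le> 3" if "x \<in> verts T" for x
      using max fin that Max_ge[of "vheight T ` verts T" "vheight T x"] by simp
    show "wf_graph T" "\<not> has_cycle T" by fact+
    show "\<exists>x\<in>verts T. vheight T x = 3" using z by blast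
  qed
qed

context height3_tree
begin

abbreviation V where "V \<equiv> verts T"
abbreviation h where "h \<equiv> vheight T"
abbreviation N where "N \<equiv> nbhd T"

lemma finite_V: "finite V"
  using wf by (simp add: wf_graph_def)

lemma nbr_in_V: "y \<in> N x \<Longrightarrow> y \<in> V \<and> x \<in> V"
  using nbhd_subset[of T x] nbhd_in_verts[OF wf, of y x] by blast

lemma nbr_sym: "y \<in> N x \<Longrightarrow> x \<in> N y"
  using nbhd_sym[of y T x] nbr_in_V by blast

lemma nbr_neq: "y \<in> N x \<Longrightarrow> y \<noteq> x"
  using nbhd_irrefl[OF wf] .

lemma leaf_nbhd_eq: assumes "leaf T l" "l \<in> N s" shows "N l = {s}"
proof -
  obtain t where "N l = {t}" using leaf_nbhd_singleton[OF assms(1)] by blast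
  then show ?thesis using nbr_sym[OF assms(2)] by simp
qed

lemma leaf_height0: "leaf T l \<Longrightarrow> h l = 0"
  using height0_iff_leaf by (simp add: leaf_def)

lemma height_cases: "x \<in> V \<Longrightarrow> h x = 0 \<or> h x = 1 \<or> h x = 2 \<or> h x = 3"
  using height_le3[of x] by linarith

lemma height1_nbr: "h x = 1 \<Longrightarrow> y \<in> N x \<Longrightarrow> h y = 0 \<or> h y = 2"
  using height_nbr[of y x] by auto

lemma height2_nbr: "h x = 2 \<Longrightarrow> y \<in> N x \<Longrightarrow> h y = 1 \<or> h y = 3"
  using height_nbr[of y x] by auto

lemma height3_nbr: "h x = 3 \<Longrightarrow> y \<in> N x \<Longrightarrow> h y = 2"
  using height_nbr[of y x] height_le3[of y] nbr_in_V[of y x] by auto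

lemma has_nbr: "x \<in> V \<Longrightarrow> \<exists>y. y \<in> N x"
  using height_descend[of x] height0_iff_leaf[of x] leaf_nbhd_singleton[of T x] by blast

lemma two_nbrs:
  assumes x: "x \<in> V" "0 < h x" shows "\<exists>a b. a \<noteq> b \<and> a \<in> N x \<and> b \<in> N x"
proof -
  have "card (N x) \<noteq> 1" using height0_iff_leaf[OF x(1)] x by (simp add: leaf_def degree_def)
  obtain a where a: "a \<in> N x" using height_descend[OF x] by blast
  moreover have "N x \<noteq> {a}" using \<open>card (N x) \<noteq> 1\<close> by auto
  ultimately obtain b where "b \<in> N x" "b \<noteq> a" by blast
  then show ?thesis using a by blast
qed

lemma height1_leaf_nbr: "x \<in> V \<Longrightarrow> h x = 1 \<Longrightarrow> \<exists>l\<in>N x. leaf T l"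
  using height_descend[of x] height0_iff_leaf nbr_in_V by fastforce

lemma height1_height2_nbr:
  assumes x: "x \<in> V" "h x = 1" shows "\<exists>y\<in>N x. h y = 2"
proof (rule ccontr)
  assume "\<not> ?thesis"
  then have leaves: "leaf T y" if "y \<in> N x" for y
    using that height1_nbr[OF x(2)] height0_iff_leaf nbr_in_V by blast
  have "insert x (N x) = V"
    using x(1) nbr_in_V leaf_nbhd_eq[OF leaves] by (intro nbhd_closed_eq) auto
  moreover obtain z where "z \<in> V" "h z = 3" using height3_exists by blast
  ultimately show False using x(2) leaves leaf_height0 by force
qed

lemma height2_height3_nbr:
  assumes w: "w \<in> V" "h w = 2"
    and unique: "\<And>a b. a \<in> N w \<Longrightarrow> b \<in> N w \<Longrightarrow> h a = 1 \<Longrightarrow> h b = 1 \<Longrightarrow> a = b"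
  shows "\<exists>u\<in>N w. h u = 3"
proof -
  obtain a b where ab: "a \<noteq> b" "a \<in> N w" "b \<in> N w" using two_nbrs[OF w(1)] w(2) by auto
  then have "h a = 3 \<or> h b = 3" using height2_nbr[OF w(2)] unique by blast
  then show ?thesis using ab by blast
qed

lemma reach_avoiding_extend:
  "reach_avoiding T y x a \<Longrightarrow> a \<in> N b \<Longrightarrow> b \<noteq> y \<Longrightarrow> reach_avoiding T y x b"
  using reach_avoiding.step[of T y x a b] nbr_sym[of a b] by blast

lemma reach_avoiding_nbr: "x \<in> N a \<Longrightarrow> x \<noteq> y \<Longrightarrow> a \<noteq> y \<Longrightarrow> reach_avoiding T y x a"
  using reach_avoiding_extend[OF reach_avoiding.refl] nbr_in_V[of x a] by blast

lemma nbrs_not_reach_avoiding: "a \<in> N y \<Longrightarrow> b \<in> N y \<Longrightarrow> a \<noteq> b \<Longrightarrow> \<not> reach_avoiding T y a b"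
  using has_cycle_if_reach_avoiding[of y T a b] acyclic nbr_in_V by blast

lemma nbr_outside_if_even_heights:
  assumes y: "y \<in> V" "h y = 0 \<or> h y = 2" and X: "\<And>x. x \<in> X \<Longrightarrow> h x = 0 \<or> h x = 2"
  shows "\<exists>d\<in>N y. d \<notin> X"
proof -
  obtain d where d: "d \<in> N y" using has_nbr[OF y(1)] by blast
  then have "h d = 1 \<or> h d = 3" using height_nbr[OF d] y(2) by auto
  then show ?thesis using d X by force
qed

lemma nbr_outside_if_reach_avoiding:
  assumes y: "y \<in> V" "0 < h y" and reach: "\<And>x. x \<in> N y \<Longrightarrow> x \<in> X \<Longrightarrow> reach_avoiding T y x c"
  shows "\<exists>d\<in>N y. d \<notin> X"
proof (rule ccontr)
  assume "\<not> ?thesis"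
  moreover obtain a b where ab: "a \<noteq> b" "a \<in> N y" "b \<in> N y" using two_nbrs[OF y] by blast
  ultimately have "reach_avoiding T y a c" "reach_avoiding T y b c" using reach by blast+
  then have "reach_avoiding T y a b" using reach_avoiding_trans reach_avoiding_sym by metis
  then show False using nbrs_not_reach_avoiding ab by blast
qed

end

section \<open>Total domination\<close>

lemma TD_setI:
  assumes wf: "wf_graph G" and D: "D \<subseteq> verts G" and dom: "\<And>y. y \<in> verts G \<Longrightarrow> \<exists>d\<in>D. d \<in> nbhd G y"
  shows "TD_set G D"
  unfolding TD_set_def NS_def
proof (intro conjI equalityI subsetI)
  fix y assume "y \<in> (\<Union>v\<in>D. nbhd G v)"
  then show "y \<in> verts G" using nbhd_subset[of G] by blast
next
  fix y assume y: "y \<in> verts G"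
  then obtain d where "d \<in> D" "d \<in> nbhd G y" using dom by blast
  then show "y \<in> (\<Union>v\<in>D. nbhd G v)" using nbhd_sym[of d G y] y by blast
qed (use D in blast)

lemma TD_setE:
  assumes wf: "wf_graph G" and D: "TD_set G D" and y: "y \<in> verts G"
  shows "\<exists>d\<in>D. d \<in> nbhd G y"
proof -
  obtain d where "d \<in> D" "y \<in> nbhd G d" using D y unfolding TD_set_def NS_def by blast
  then show ?thesis using nbhd_sym[of y G d] nbhd_in_verts[OF wf, of y d] by blast
qed

lemma finite_TD_set: "finite (verts G) \<Longrightarrow> TD_set G D \<Longrightarrow> finite D"
  unfolding TD_set_def using finite_subset by blast

lemma minimal_TD_set_exists:
  assumes fin: "finite (verts G)" and C: "TD_set G C"
  obtains D where "D \<subseteq> C" "minimal_TD_set G D"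
proof -
  obtain D where D: "D \<subseteq> C \<and> TD_set G D"
    and least: "\<And>D'. D' \<subseteq> C \<and> TD_set G D' \<Longrightarrow> card D \<le> card D'"
    using ex_has_least_nat[of "\<lambda>D. D \<subseteq> C \<and> TD_set G D" C card] C by blast
  have "minimal_TD_set G D"
    unfolding minimal_TD_set_def
  proof (intro conjI allI impI notI)
    fix D' assume D': "D' \<subset> D" "TD_set G D'"
    then have "card D \<le> card D'" using least D by blast
    moreover have "card D' < card D" using psubset_card_mono[OF finite_TD_set[OF fin] D'(1)] D by blast
    ultimately show False by simp
  qed (use D in blast)
  then show thesis using that D by blast
qed

lemma unmixed_card_le:
  assumes fin: "finite (verts G)" and um: "unmixed G" and D: "minimal_TD_set G D" and D': "TD_set G D'"
  shows "card D \<le> card D'"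
proof -
  obtain D'' where "D'' \<subseteq> D'" "minimal_TD_set G D''" using minimal_TD_set_exists[OF fin D'] by blast
  moreover have "card D = card D''" using um D \<open>minimal_TD_set G D''\<close> unfolding unmixed_def by blast
  ultimately show ?thesis using card_mono[OF finite_TD_set[OF fin D']] by simp
qed

lemma TD_set_forced:
  assumes wf: "wf_graph G" and D: "TD_set G D" "D \<subseteq> C"
    and y: "y \<in> verts G" and only: "nbhd G y \<inter> C \<subseteq> {x}"
  shows "x \<in> D"
  using TD_setE[OF wf D(1) y] D(2) only by blast

lemma TD_set_Diff:
  assumes wf: "wf_graph G" and out: "\<And>y. y \<in> verts G \<Longrightarrow> \<exists>d\<in>nbhd G y. d \<notin> X"
  shows "TD_set G (verts G - X)"
  using out nbhd_subset[of G] by (intro TD_setI[OF wf]) blast+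

text \<open>In an unmixed graph every minimal TD-set has minimum size, so no part \<open>A\<close> of it can be
  traded for fewer vertices that take over the domination duties of \<open>A\<close>.\<close>

lemma unmixed_no_cheaper_replacement:
  assumes wf: "wf_graph G" and um: "unmixed G" and D: "minimal_TD_set G D"
    and A: "A \<subseteq> D" and B: "B \<subseteq> verts G" "card B < card A"
    and dom: "\<And>a y. a \<in> A \<Longrightarrow> y \<in> nbhd G a \<Longrightarrow> \<exists>b\<in>(D - A) \<union> B. b \<in> nbhd G y"
  shows False
proof -
  have fin: "finite (verts G)" using wf by (simp add: wf_graph_def)
  have TD: "TD_set G D" using D by (simp add: minimal_TD_set_def)
  have finD: "finite D" using finite_TD_set[OF fin TD] .
  have "TD_set G ((D - A) \<union> B)"
  proof (rule TD_setI[OF wf])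
    show "(D - A) \<union> B \<subseteq> verts G" using TD B(1) by (auto simp: TD_set_def)
    fix y assume y: "y \<in> verts G"
    then obtain d where d: "d \<in> D" "d \<in> nbhd G y" using TD_setE[OF wf TD] by blast
    show "\<exists>b\<in>(D - A) \<union> B. b \<in> nbhd G y"
    proof (cases "d \<in> A")
      case True
      then show ?thesis using dom nbhd_sym[of d G y] d(2) y by blast
    qed (use d in blast)
  qed
  then have "card D \<le> card ((D - A) \<union> B)" by (rule unmixed_card_le[OF fin um D])
  also have "\<dots> \<le> card (D - A) + card B" by (rule card_Un_le)
  also have "\<dots> = card D - card A + card B" using card_Diff_subset[OF finite_subset[OF A finD] A] by simp
  finally show False using B(2) card_mono[OF finD A] by linarith
qed

section \<open>Unmixed trees of height 3\<close>

context height3_tree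
begin

lemma TD_set_without_support_nbrs:
  assumes w: "h w = 2" and s: "s1 \<in> N w" "s2 \<in> N w" "h s1 = 1" "h s2 = 1"
    and l: "l1 \<in> N s1" "l2 \<in> N s2"
  shows "TD_set T (V - ((N s1 \<union> N s2) - {l1, l2}))"
proof (rule TD_set_Diff[OF wf])
  let ?X = "(N s1 \<union> N s2) - {l1, l2}"
  fix y assume y: "y \<in> V"
  consider "h y = 0 \<or> h y = 2" | "h y = 1" | "h y = 3" using height_cases[OF y] by blast
  then show "\<exists>d\<in>N y. d \<notin> ?X"
  proof cases
    case 1
    have "h x = 0 \<or> h x = 2" if "x \<in> ?X" for x using that height1_nbr s(3,4) by blast
    then show ?thesis using nbr_outside_if_even_heights[OF y 1] by blast
  next
    case 2
    show ?thesis
    proof (cases "y \<in> {s1, s2}")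
      case True
      then show ?thesis using l by blast
    next
      case False
      obtain l where l: "l \<in> N y" "leaf T l" using height1_leaf_nbr[OF y 2] by blast
      have "l \<notin> N s1" "l \<notin> N s2" using leaf_nbhd_eq[OF l(2)] nbr_sym[OF l(1)] False by blast+
      then show ?thesis using l(1) by blast
    qed
  next
    case 3
    show ?thesis
    proof (rule nbr_outside_if_reach_avoiding[OF y, of ?X w])
      fix x assume x: "x \<in> N y" "x \<in> ?X"
      then obtain s' where s': "s' \<in> {s1, s2}" "x \<in> N s'" by blast
      have "s' \<noteq> y" "w \<noteq> y" using s' s(3,4) w 3 by auto
      then have "reach_avoiding T y x s'" using reach_avoiding_nbr[OF s'(2) nbr_neq[OF x(1)]] by blast
      moreover have "s' \<in> N w" using s' s(1,2) by blast
      ultimately show "reach_avoiding T y x w" using reach_avoiding_extend \<open>w \<noteq> y\<close> by blast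
    qed (simp add: 3)
  qed
qed

text \<open>A minimal TD-set avoiding the other neighbours of \<open>s1\<close>, \<open>s2\<close> contains both leaves
  \<open>l1\<close>, \<open>l2\<close>, which \<open>w\<close> alone could replace.\<close>

lemma height2_unique_height1_nbr:
  assumes um: "unmixed T" and w: "h w = 2"
    and s: "s1 \<in> N w" "s2 \<in> N w" "h s1 = 1" "h s2 = 1"
  shows "s1 = s2"
proof (rule ccontr)
  assume ne: "s1 \<noteq> s2"
  have sV: "s1 \<in> V" "s2 \<in> V" using nbr_in_V s(1,2) by blast+
  obtain l1 where l1: "l1 \<in> N s1" "leaf T l1" using height1_leaf_nbr[OF sV(1) s(3)] by blast
  obtain l2 where l2: "l2 \<in> N s2" "leaf T l2" using height1_leaf_nbr[OF sV(2) s(4)] by blast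
  have Nl: "N l1 = {s1}" "N l2 = {s2}" using leaf_nbhd_eq l1 l2 by blast+
  define X where "X = (N s1 \<union> N s2) - {l1, l2}"
  obtain D where D: "D \<subseteq> V - X" "minimal_TD_set T D"
    using minimal_TD_set_exists[OF finite_V TD_set_without_support_nbrs[OF w s l1(1) l2(1)]]
    unfolding X_def by blast
  have "l2 \<notin> N s1" "l1 \<notin> N s2" using Nl ne nbr_sym[of l2 s1] nbr_sym[of l1 s2] by auto
  then have "N s1 \<inter> (V - X) \<subseteq> {l1}" "N s2 \<inter> (V - X) \<subseteq> {l2}" unfolding X_def by auto
  then have "l1 \<in> D" "l2 \<in> D" using TD_set_forced[OF wf _ D(1)] D(2) sV
    unfolding minimal_TD_set_def by blast+
  show False
  proof (rule unmixed_no_cheaper_replacement[OF wf um D(2), of "{l1, l2}" "{w}"])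
    show "{l1, l2} \<subseteq> D" "{w} \<subseteq> V" using \<open>l1 \<in> D\<close> \<open>l2 \<in> D\<close> nbr_in_V s(1) by auto
    have "l1 \<noteq> l2" using Nl ne by auto
    then show "card {w} < card {l1, l2}" by simp
    fix a y assume "a \<in> {l1, l2}" "y \<in> N a"
    then have "y \<in> {s1, s2}" using Nl by auto
    then show "\<exists>b\<in>(D - {l1, l2}) \<union> {w}. b \<in> N y" using nbr_sym s by blast
  qed
qed

end

text \<open>The configuration refuted by unmixedness: a height-1 vertex \<open>s\<close> with two height-2
  neighbours \<open>w1\<close>, \<open>w2\<close>. Each height-3 neighbour \<open>u\<close> of \<open>w2\<close> is continued away from \<open>w2\<close> by a
  path \<open>u, z u, t u, lf (t u)\<close> ending in a leaf, and \<open>u1\<close> is a height-3 neighbour of \<open>w1\<close>.\<close>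

locale height1_fork = height3_tree +
  fixes s w1 w2 u1 :: 'a and z t lf :: "'a \<Rightarrow> 'a"
  assumes unmixed: "unmixed T"
    and s: "h s = 1"
    and w: "w1 \<in> N s" "w2 \<in> N s" "w1 \<noteq> w2" "h w1 = 2" "h w2 = 2"
    and u1: "u1 \<in> N w1" "h u1 = 3"
    and U_nonempty: "\<exists>u\<in>N w2. h u = 3"
    and path: "\<And>u. u \<in> N w2 \<Longrightarrow> h u = 3 \<Longrightarrow>
      z u \<in> N u \<and> z u \<noteq> w2 \<and> t u \<in> N (z u) \<and> h (t u) = 1 \<and> lf (t u) \<in> N (t u) \<and> leaf T (lf (t u))"
begin

abbreviation U where "U \<equiv> {u \<in> N w2. h u = 3}"

lemma U_D:
  assumes "u \<in> U"
  shows "u \<in> N w2" "h u = 3" "z u \<in> N u" "z u \<noteq> w2" "h (z u) = 2" "t u \<in> N (z u)" "h (t u) = 1"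
    "lf (t u) \<in> N (t u)" "N (lf (t u)) = {t u}" "h (lf (t u)) = 0"
  using assms path[of u] height3_nbr[of u "z u"] leaf_nbhd_eq leaf_height0 by auto

lemma only_height1_nbr: "a \<in> N w1 \<or> a \<in> N w2 \<Longrightarrow> h a = 1 \<Longrightarrow> a = s"
  using height2_unique_height1_nbr[OF unmixed] w s nbr_sym by blast

lemma t_neq_s: assumes u: "u \<in> U" shows "t u \<noteq> s"
proof
  assume "t u = s"
  then have "z u \<in> N s" using U_D(6)[OF u] nbr_sym by simp
  have "reach_avoiding T s (z u) u" by (rule reach_avoiding_nbr) (use U_D[OF u] s in auto)
  then have "reach_avoiding T s (z u) w2"
    by (rule reach_avoiding_extend) (use U_D(1)[OF u] w s in auto)
  then show False using nbrs_not_reach_avoiding \<open>z u \<in> N s\<close> w(2) U_D(4)[OF u] by blast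
qed

definition X where "X = (\<Union>u\<in>U. N u - {w2}) \<union> (N u1 - {w1}) \<union> (\<Union>u\<in>U. N (t u) - {lf (t u)})"

lemma X_cases:
  assumes "x \<in> X"
  obtains u where "u \<in> U" "x \<in> N u" "x \<noteq> w2" | "x \<in> N u1" "x \<noteq> w1"
    | u where "u \<in> U" "x \<in> N (t u)" "x \<noteq> lf (t u)"
  using assms unfolding X_def by blast

lemma X_even: assumes "x \<in> X" shows "h x = 0 \<or> h x = 2"
  using assms
proof (cases rule: X_cases)
  case (1 u)
  then show ?thesis using height3_nbr U_D(2) by blast
next
  case 2
  then show ?thesis using height3_nbr u1(2) by blast
next
  case (3 u)
  then show ?thesis using height1_nbr U_D(7) by blast
qed

lemma w1_notin_X: "w1 \<notin> X"
proof
  assume "w1 \<in> X"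
  then show False
  proof (cases rule: X_cases)
    case (1 u)
    have "reach_avoiding T s w1 u" by (rule reach_avoiding_nbr) (use 1 w s U_D(2)[OF 1(1)] in auto)
    then have "reach_avoiding T s w1 w2"
      by (rule reach_avoiding_extend) (use U_D(1)[OF 1(1)] w s in auto)
    then show False using nbrs_not_reach_avoiding w by blast
  next
    case (3 u)
    then have "t u \<in> N w1" using nbr_sym by blast
    then show False using only_height1_nbr U_D(7)[OF 3(1)] t_neq_s[OF 3(1)] by blast
  qed simp
qed

lemma w2_notin_X: "w2 \<notin> X"
proof
  assume "w2 \<in> X"
  then show False
  proof (cases rule: X_cases)
    case 2
    have "reach_avoiding T s w1 u1" by (rule reach_avoiding_nbr) (use nbr_sym[OF u1(1)] w s u1 in auto)
    then have "reach_avoiding T s w1 w2"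
      by (rule reach_avoiding_extend) (use nbr_sym[OF 2(1)] w s in auto)
    then show False using nbrs_not_reach_avoiding w by blast
  next
    case (3 u)
    then have "t u \<in> N w2" using nbr_sym by blast
    then show False using only_height1_nbr U_D(7)[OF 3(1)] t_neq_s[OF 3(1)] by blast
  qed simp
qed

lemma lf_notin_X: assumes u: "u \<in> U" shows "lf (t u) \<notin> X"
proof
  have h0: "h (lf (t u)) = 0" using U_D(10)[OF u] .
  assume "lf (t u) \<in> X"
  then show False
  proof (cases rule: X_cases)
    case (1 u')
    then show False using height3_nbr[OF U_D(2)[OF 1(1)] 1(2)] h0 by simp
  next
    case 2
    then show False using height3_nbr[OF u1(2) 2(1)] h0 by simp
  next
    case (3 u')
    then have "t u' = t u" using U_D(9)[OF u] nbr_sym by blast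
    then show False using 3 by simp
  qed
qed

lemma height1_nbr_outside_X:
  assumes y: "y \<in> V" "h y = 1" shows "\<exists>d\<in>N y. d \<notin> X"
proof (cases "y \<in> t ` U")
  case True
  then show ?thesis using lf_notin_X U_D(8) by blast
next
  case False
  obtain l where l: "l \<in> N y" "leaf T l" using height1_leaf_nbr[OF y] by blast
  have "l \<notin> X"
  proof
    assume "l \<in> X"
    then show False
    proof (cases rule: X_cases)
      case (1 u)
      then show False using height3_nbr[OF U_D(2)[OF 1(1)] 1(2)] leaf_height0[OF l(2)] by simp
    next
      case 2
      then show False using height3_nbr[OF u1(2) 2(1)] leaf_height0[OF l(2)] by simp
    next
      case (3 u)
      then have "y = t u" using leaf_nbhd_eq[OF l(2)] nbr_sym[OF l(1)] by blast
      then show False using 3 False by blast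
    qed
  qed
  then show ?thesis using l(1) by blast
qed

lemma height3_nbr_outside_X:
  assumes y: "y \<in> V" "h y = 3" shows "\<exists>d\<in>N y. d \<notin> X"
proof (cases "y \<in> U \<or> y = u1")
  case True
  then show ?thesis using w1_notin_X w2_notin_X nbr_sym u1(1) by blast
next
  case False
  show ?thesis
  proof (rule nbr_outside_if_reach_avoiding[OF y(1), of X w2])
    fix x assume x: "x \<in> N y" "x \<in> X"
    have "x \<noteq> y" using nbr_neq[OF x(1)] .
    have w2y: "w2 \<noteq> y" using w(5) y(2) by auto
    from x(2) show "reach_avoiding T y x w2"
    proof (cases rule: X_cases)
      case (1 u)
      have "reach_avoiding T y x u" using reach_avoiding_nbr 1 \<open>x \<noteq> y\<close> False by blast
      then show ?thesis using reach_avoiding_extend U_D(1)[OF 1(1)] w2y by blast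
    next
      case 2
      have "reach_avoiding T y x u1" using reach_avoiding_nbr 2 \<open>x \<noteq> y\<close> False by blast
      moreover have "w1 \<noteq> y" "s \<noteq> y" using w(4) s y(2) by auto
      ultimately have "reach_avoiding T y x s" using reach_avoiding_extend u1(1) w(1) by blast
      then show ?thesis using reach_avoiding_extend nbr_sym[OF w(2)] w2y by blast
    next
      case (3 u)
      have "t u \<noteq> y" "z u \<noteq> y" "u \<noteq> y" using U_D[OF 3(1)] y(2) False 3(1) by auto
      then have "reach_avoiding T y x u"
        using reach_avoiding_nbr[OF 3(2) \<open>x \<noteq> y\<close>] reach_avoiding_extend U_D(3,6)[OF 3(1)] by blast
      then show ?thesis using reach_avoiding_extend U_D(1)[OF 3(1)] w2y by blast
    qed
  qed (simp add: y)
qed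

lemma TD_set_V_Diff_X: "TD_set T (V - X)"
proof (rule TD_set_Diff[OF wf])
  fix y assume y: "y \<in> V"
  consider "h y = 0 \<or> h y = 2" | "h y = 1" | "h y = 3" using height_cases[OF y] by blast
  then show "\<exists>d\<in>N y. d \<notin> X"
  proof cases
    case 1
    then show ?thesis using nbr_outside_if_even_heights[OF y _ X_even] by blast
  qed (use height1_nbr_outside_X[OF y] height3_nbr_outside_X[OF y] in blast)+
qed

text \<open>Distinct \<open>u, u' \<in> U\<close> with \<open>t u = t u'\<close> would be joined by the path \<open>u, z u, t u, z u', u'\<close>
  avoiding their common neighbour \<open>w2\<close>.\<close>

lemma inj_on_lf_t: "inj_on (lf \<circ> t) U"
proof (rule inj_onI)
  fix u u' assume u: "u \<in> U" "u' \<in> U" and "(lf \<circ> t) u = (lf \<circ> t) u'"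
  then have "N (lf (t u)) = N (lf (t u'))" by simp
  then have tt: "t u = t u'" using U_D(9) u by simp
  show "u = u'"
  proof (rule ccontr)
    assume "u \<noteq> u'"
    have ne: "u \<noteq> w2" "z u \<noteq> w2" "t u \<noteq> w2" "z u' \<noteq> w2" "u' \<noteq> w2"
      using U_D[OF u(1)] U_D[OF u(2)] w(5) by auto
    have "reach_avoiding T w2 u (z u)" using reach_avoiding_nbr[OF nbr_sym[OF U_D(3)[OF u(1)]]] ne by blast
    then have "reach_avoiding T w2 u (t u)" using reach_avoiding_extend nbr_sym[OF U_D(6)[OF u(1)]] ne by blast
    then have "reach_avoiding T w2 u (z u')" using reach_avoiding_extend U_D(6)[OF u(2)] tt ne by metis
    then have "reach_avoiding T w2 u u'" using reach_avoiding_extend U_D(3)[OF u(2)] ne by blast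
    then show False using nbrs_not_reach_avoiding U_D(1) u \<open>u \<noteq> u'\<close> by blast
  qed
qed

text \<open>A minimal TD-set inside \<open>V - X\<close> must contain \<open>w1\<close>, \<open>w2\<close> and every \<open>lf (t u)\<close>; trading
  \<open>w2\<close> and the leaves \<open>lf (t u)\<close> for the fewer vertices \<open>z u\<close> keeps it a TD-set.\<close>

lemma impossible: False
proof -
  obtain D where D: "D \<subseteq> V - X" "minimal_TD_set T D"
    using minimal_TD_set_exists[OF finite_V TD_set_V_Diff_X] by blast
  have forced: "x \<in> D" if "y \<in> V" "N y \<inter> (V - X) \<subseteq> {x}" for x y
    using TD_set_forced[OF wf _ D(1) that] D(2) unfolding minimal_TD_set_def by blast
  obtain u0 where u0: "u0 \<in> U" using U_nonempty by blast
  have "N u0 \<inter> (V - X) \<subseteq> {w2}" using u0 unfolding X_def by blast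
  then have "w2 \<in> D" using forced nbr_in_V U_D(1)[OF u0] by blast
  have "N u1 \<inter> (V - X) \<subseteq> {w1}" unfolding X_def by blast
  then have "w1 \<in> D" using forced nbr_in_V u1(1) by blast
  have lf_D: "lf (t u) \<in> D" if u: "u \<in> U" for u
  proof -
    have "N (t u) \<inter> (V - X) \<subseteq> {lf (t u)}" using u unfolding X_def by blast
    then show ?thesis using forced nbr_in_V U_D(6)[OF u] by blast
  qed
  define A where "A = insert w2 ((lf \<circ> t) ` U)"
  have A_D: "A \<subseteq> D" using \<open>w2 \<in> D\<close> lf_D unfolding A_def by auto
  have w2_lf: "w2 \<notin> (lf \<circ> t) ` U" using w(5) U_D(10) by force
  have w1_A: "w1 \<notin> A" using w(3,4) U_D(10) unfolding A_def by force
  have "finite U" using finite_subset[OF _ finite_V, of U] nbr_in_V by blast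
  then have "card (z ` U) < card A"
    unfolding A_def using card_image[OF inj_on_lf_t] card_image_le[of U z] w2_lf by simp
  then show False
  proof (rule unmixed_no_cheaper_replacement[OF wf unmixed D(2) A_D, rotated])
    show "z ` U \<subseteq> V" using U_D(3) nbr_in_V by blast
    fix a y assume a: "a \<in> A" and y: "y \<in> N a"
    show "\<exists>b\<in>(D - A) \<union> z ` U. b \<in> N y"
    proof (cases "a = w2")
      case True
      then have "y \<in> N w2" using y by simp
      then consider "h y = 1" | "y \<in> U" using height2_nbr[OF w(5)] by blast
      then show ?thesis
      proof cases
        case 1
        then have "y = s" using only_height1_nbr \<open>y \<in> N w2\<close> by blast
        then show ?thesis using \<open>w1 \<in> D\<close> w1_A w(1) by blast
      next
        case 2
        then show ?thesis using U_D(3) by blast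
      qed
    next
      case False
      then obtain u where u: "u \<in> U" "a = lf (t u)" using a unfolding A_def by auto
      then have "y = t u" using y U_D(9)[OF u(1)] by simp
      moreover have "z u \<in> N (t u)" using nbr_sym[OF U_D(6)[OF u(1)]] .
      ultimately show ?thesis using u(1) by blast
    qed
  qed
qed

end

context height3_tree
begin

lemma height1_unique_height2_nbr:
  assumes um: "unmixed T" and s: "h s = 1"
    and w: "w1 \<in> N s" "w2 \<in> N s" "h w1 = 2" "h w2 = 2"
  shows "w1 = w2"
proof (rule ccontr)
  assume ne: "w1 \<noteq> w2"
  have unique: "a = b" if "a \<in> N w" "b \<in> N w" "h a = 1" "h b = 1" "h w = 2" for a b w
    using height2_unique_height1_nbr[OF um] that by blast
  obtain u1 where u1: "u1 \<in> N w1" "h u1 = 3"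
    using height2_height3_nbr[of w1] unique nbr_in_V w by blast
  have "\<exists>u\<in>N w2. h u = 3" using height2_height3_nbr[of w2] unique nbr_in_V w by blast
  have "\<exists>zu. zu \<in> N u \<and> zu \<noteq> w2" if u: "u \<in> N w2" "h u = 3" for u
  proof -
    obtain a b where "a \<noteq> b" "a \<in> N u" "b \<in> N u" using two_nbrs[of u] u nbr_in_V[OF u(1)] by auto
    then show ?thesis by blast
  qed
  then obtain z where z: "\<And>u. u \<in> N w2 \<Longrightarrow> h u = 3 \<Longrightarrow> z u \<in> N u \<and> z u \<noteq> w2" by metis
  have "\<exists>tv. tv \<in> N v \<and> h tv = 1" if "h v = 2" "v \<in> V" for v
    using height_descend[of v] that by force
  then obtain t where t: "\<And>v. v \<in> V \<Longrightarrow> h v = 2 \<Longrightarrow> t v \<in> N v \<and> h (t v) = 1" by metis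
  obtain lf where lf: "\<And>v. v \<in> V \<Longrightarrow> h v = 1 \<Longrightarrow> lf v \<in> N v \<and> leaf T (lf v)"
    using height1_leaf_nbr by metis
  interpret height1_fork T s w1 w2 u1 z "t \<circ> z" lf
  proof
    show "z u \<in> N u \<and> z u \<noteq> w2 \<and> (t \<circ> z) u \<in> N (z u) \<and> h ((t \<circ> z) u) = 1
        \<and> lf ((t \<circ> z) u) \<in> N ((t \<circ> z) u) \<and> leaf T (lf ((t \<circ> z) u))" if "u \<in> N w2" "h u = 3" for u
      using z[OF that] t[of "z u"] lf[of "t (z u)"] height3_nbr[OF that(2)] nbr_in_V by auto
  qed (use um s w ne u1 \<open>\<exists>u\<in>N w2. h u = 3\<close> in auto)
  show False by (rule impossible)
qed

end

locale matched_height3_tree = height3_tree +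
  assumes height1_unique_height2:
      "\<And>x a b. vheight T x = 1 \<Longrightarrow> a \<in> nbhd T x \<Longrightarrow> b \<in> nbhd T x \<Longrightarrow>
         vheight T a = 2 \<Longrightarrow> vheight T b = 2 \<Longrightarrow> a = b"
    and height2_unique_height1:
      "\<And>x a b. vheight T x = 2 \<Longrightarrow> a \<in> nbhd T x \<Longrightarrow> b \<in> nbhd T x \<Longrightarrow>
         vheight T a = 1 \<Longrightarrow> vheight T b = 1 \<Longrightarrow> a = b"

lemma (in height3_tree) matched_if_unmixed: "unmixed T \<Longrightarrow> matched_height3_tree T"
  using height1_unique_height2_nbr height2_unique_height1_nbr
  by unfold_locales blast+

section \<open>Deleting a pendant path\<close>

definition delete_verts :: "'a graph \<Rightarrow> 'a set \<Rightarrow> 'a graph" where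
  "delete_verts G P = (verts G - P, {e \<in> edges G. e \<inter> P = {}})"

lemma verts_delete_verts [simp]: "verts (delete_verts G P) = verts G - P"
  by (simp add: delete_verts_def verts_def)

lemma edges_delete_verts [simp]: "edges (delete_verts G P) = {e \<in> edges G. e \<inter> P = {}}"
  by (simp add: delete_verts_def edges_def)

lemma nbhd_delete_verts: "x \<notin> P \<Longrightarrow> nbhd (delete_verts G P) x = nbhd G x - P"
  unfolding nbhd_def by auto

lemma wf_graph_delete_verts: assumes "wf_graph G" shows "wf_graph (delete_verts G P)"
  unfolding wf_graph_def
proof (intro conjI ballI)
  show "finite (verts (delete_verts G P))" using assms by (simp add: wf_graph_def)
  fix e assume "e \<in> edges (delete_verts G P)"
  then have e: "e \<in> edges G" "e \<inter> P = {}" by auto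
  then obtain a b where "e = {a, b}" "a \<noteq> b" "a \<in> verts G" "b \<in> verts G"
    using assms unfolding wf_graph_def by blast
  then show "\<exists>a b. e = {a, b} \<and> a \<noteq> b \<and> a \<in> verts (delete_verts G P) \<and> b \<in> verts (delete_verts G P)"
    using e(2) by auto
qed

lemma has_cycle_delete_verts: "has_cycle (delete_verts G P) \<Longrightarrow> has_cycle G"
  unfolding has_cycle_def walk_def by auto

context height3_tree
begin

context
  fixes P :: "'a set" and v :: 'a
  assumes P: "P \<subseteq> V" and v: "v \<in> V" "v \<notin> P" and P_nbhd: "\<And>p. p \<in> P \<Longrightarrow> N p \<subseteq> P \<union> {v}"
begin

lemma nbhd_delete_pendant_subset: "x \<in> V - P \<Longrightarrow> nbhd (delete_verts T P) x \<subseteq> N x"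
  using nbhd_delete_verts[of x P T] by blast

lemma nbhd_delete_pendant: "x \<in> V - P \<Longrightarrow> x \<noteq> v \<Longrightarrow> nbhd (delete_verts T P) x = N x"
  using nbhd_delete_verts[of x P T] P_nbhd nbr_sym by blast

lemma nbhd_closed_delete_pendant:
  assumes X: "X \<subseteq> V - P" "X \<noteq> {}" "\<forall>x\<in>X. nbhd (delete_verts T P) x \<subseteq> X"
  shows "X = V - P"
proof (cases "v \<in> X")
  case True
  have "N x \<subseteq> X \<union> P" if "x \<in> X \<union> P" for x
    using that X(1,3) nbhd_delete_verts[of x P T] P_nbhd True by blast
  then have "X \<union> P = V" using X(1,2) P by (intro nbhd_closed_eq) auto
  then show ?thesis using X(1) by blast
next
  case False
  have "N x \<subseteq> X" if "x \<in> X" for x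
    using that X(1,3) nbhd_delete_pendant[of x] False by auto
  then have "X = V" using X(1,2) by (intro nbhd_closed_eq) auto
  then show ?thesis using X(1) P by blast
qed

context
  assumes two: "\<exists>a b. a \<noteq> b \<and> a \<in> N v - P \<and> b \<in> N v - P"
    and lower: "\<exists>y\<in>N v - P. Suc (h y) = h v"
begin

lemma leaf_delete_pendant_iff: "x \<in> V - P \<Longrightarrow> leaf (delete_verts T P) x \<longleftrightarrow> leaf T x"
proof (cases "x = v")
  case True
  obtain a b where ab: "a \<noteq> b" "a \<in> N v - P" "b \<in> N v - P" using two by blast
  then have "card {a, b} \<le> card (N v - P)" "card {a, b} \<le> card (N v)"
    using finite_nbhd[OF wf] by (intro card_mono; auto)+
  then show ?thesis
    using True ab(1) nbhd_delete_verts[of v P T] v by (simp add: leaf_def degree_def)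
qed (simp add: leaf_def degree_def nbhd_delete_pendant)

lemma vheight_delete_pendant: "x \<in> V - P \<Longrightarrow> vheight (delete_verts T P) x = h x"
proof (rule vheight_eqI[OF wf_graph_delete_verts[OF wf]])
  show "h y = 0 \<longleftrightarrow> leaf (delete_verts T P) y" if "y \<in> verts (delete_verts T P)" for y
    using that height0_iff_leaf[of y] leaf_delete_pendant_iff[of y] by simp
  show "\<exists>z\<in>nbhd (delete_verts T P) y. Suc (h z) = h y"
    if "y \<in> verts (delete_verts T P)" "0 < h y" for y
  proof (cases "y = v")
    case True
    then show ?thesis using lower nbhd_delete_verts[of v P T] v by simp
  next
    case False
    then show ?thesis using that height_descend nbhd_delete_pendant by simp
  qed
  show "h y \<le> Suc (h z)" if z: "z \<in> nbhd (delete_verts T P) y" for y z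
  proof -
    have "y \<in> V - P" using nbhd_in_verts[OF wf_graph_delete_verts[OF wf] z] by simp
    then have "z \<in> N y" using z nbhd_delete_pendant_subset by blast
    then show ?thesis using height_nbr[of z y] by linarith
  qed
qed simp

lemma height3_tree_delete_pendant:
  assumes height3: "\<exists>x\<in>V - P. h x = 3"
  shows "height3_tree (delete_verts T P)"
proof
  have nbr: "z \<in> V - P" "y \<in> V - P" "z \<in> N y" if "z \<in> nbhd (delete_verts T P) y" for y z
    using that nbhd_subset[of "delete_verts T P" y] nbhd_in_verts[OF wf_graph_delete_verts[OF wf] that]
      nbhd_delete_pendant_subset[of y] by auto
  show "wf_graph (delete_verts T P)" using wf_graph_delete_verts[OF wf] .
  show "\<not> has_cycle (delete_verts T P)" using acyclic has_cycle_delete_verts by blast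
  show "X = verts (delete_verts T P)"
    if "X \<subseteq> verts (delete_verts T P)" "X \<noteq> {}" "\<forall>x\<in>X. nbhd (delete_verts T P) x \<subseteq> X" for X
    using that nbhd_closed_delete_pendant by simp
  show "vheight (delete_verts T P) x = 0 \<longleftrightarrow> leaf (delete_verts T P) x"
    if "x \<in> verts (delete_verts T P)" for x
    using that vheight_delete_pendant height0_iff_leaf leaf_delete_pendant_iff by simp
  show "\<exists>y\<in>nbhd (delete_verts T P) x. Suc (vheight (delete_verts T P) y) = vheight (delete_verts T P) x"
    if "x \<in> verts (delete_verts T P)" "0 < vheight (delete_verts T P) x" for x
  proof (cases "x = v")
    case True
    obtain y where y: "y \<in> N v - P" "Suc (h y) = h v" using lower by blast
    then have "vheight (delete_verts T P) y = h y" using vheight_delete_pendant nbr_in_V by blast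
    then show ?thesis
      using True y nbhd_delete_verts[of v P T] vheight_delete_pendant v by (intro bexI[of _ y]) auto
  next
    case False
    have x: "x \<in> V - P" "0 < h x" using that vheight_delete_pendant by auto
    then obtain y where y: "y \<in> N x" "Suc (h y) = h x" using height_descend by blast
    then have "y \<in> nbhd (delete_verts T P) x" using nbhd_delete_pendant[OF x(1) False] by simp
    then show ?thesis using nbr y(2) vheight_delete_pendant x(1) by (metis (no_types, lifting))
  qed
  show "vheight (delete_verts T P) x = Suc (vheight (delete_verts T P) y)
      \<or> vheight (delete_verts T P) y = Suc (vheight (delete_verts T P) x)"
    if "y \<in> nbhd (delete_verts T P) x" for x y
    using nbr[OF that] height_nbr vheight_delete_pendant by simp
  show "vheight (delete_verts T P) x \<le> 3" if "x \<in> verts (delete_verts T P)" for x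
    using that height_le3 vheight_delete_pendant by simp
  show "\<exists>x\<in>verts (delete_verts T P). vheight (delete_verts T P) x = 3"
    using height3 vheight_delete_pendant by auto
qed

end

end

end

context matched_height3_tree
begin

lemma matched_delete_pendant:
  assumes P: "P \<subseteq> V" and v: "v \<in> V" "v \<notin> P" and P_nbhd: "\<And>p. p \<in> P \<Longrightarrow> N p \<subseteq> P \<union> {v}"
    and two: "\<exists>a b. a \<noteq> b \<and> a \<in> N v - P \<and> b \<in> N v - P"
    and lower: "\<exists>y\<in>N v - P. Suc (h y) = h v"
    and height3: "\<exists>x\<in>V - P. h x = 3"
  shows "matched_height3_tree (delete_verts T P)"
proof (rule matched_height3_tree.intro)
  note facts = P v P_nbhd two lower
  show "height3_tree (delete_verts T P)" by (rule height3_tree_delete_pendant[OF facts height3])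
  have nbr: "a \<in> N x" "vheight (delete_verts T P) a = h a" "vheight (delete_verts T P) x = h x"
    if "a \<in> nbhd (delete_verts T P) x" "x \<in> V - P" for a x
    using that nbhd_delete_pendant_subset[OF P v P_nbhd] vheight_delete_pendant[OF facts]
      nbhd_subset[of "delete_verts T P" x] by auto
  show "matched_height3_tree_axioms (delete_verts T P)"
  proof
    fix x a b
    assume "a \<in> nbhd (delete_verts T P) x" "b \<in> nbhd (delete_verts T P) x"
    moreover have "x \<in> V - P"
      using calculation nbhd_in_verts[OF wf_graph_delete_verts[OF wf]] by simp
    ultimately show "vheight (delete_verts T P) x = 1 \<Longrightarrow> vheight (delete_verts T P) a = 2 \<Longrightarrow>
        vheight (delete_verts T P) b = 2 \<Longrightarrow> a = b"
      and "vheight (delete_verts T P) x = 2 \<Longrightarrow> vheight (delete_verts T P) a = 1 \<Longrightarrow>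
        vheight (delete_verts T P) b = 1 \<Longrightarrow> a = b"
      using nbr height1_unique_height2 height2_unique_height1 by metis+
  qed
qed

end

section \<open>The operation \<open>\<O>\<close>\<close>

lemma verts_path_graph: "verts (path_graph n) = {0..n}"
  by (simp add: path_graph_def verts_def)

lemma edges_path_graph_iff: "{a, b} \<in> edges (path_graph n) \<longleftrightarrow> a \<le> n \<and> b \<le> n \<and> (a = Suc b \<or> b = Suc a)"
proof
  assume "{a, b} \<in> edges (path_graph n)"
  then obtain i where i: "i \<in> {1..n}" "{a, b} = {i - 1, i}" by (auto simp: path_graph_def edges_def)
  then show "a \<le> n \<and> b \<le> n \<and> (a = Suc b \<or> b = Suc a)" by (auto simp: doubleton_eq_iff)
next
  assume a: "a \<le> n \<and> b \<le> n \<and> (a = Suc b \<or> b = Suc a)"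
  show "{a, b} \<in> edges (path_graph n)"
  proof (cases "a = Suc b")
    case True
    then have "{a, b} = {a - 1, a}" "a \<in> {1..n}" using a by auto
    then show ?thesis unfolding path_graph_def edges_def by auto
  next
    case False
    then have "b = Suc a" using a by simp
    then have "{a, b} = {b - 1, b}" "b \<in> {1..n}" using a by auto
    then show ?thesis unfolding path_graph_def edges_def by auto
  qed
qed

lemma wf_graph_path_graph: "wf_graph (path_graph n)"
  unfolding wf_graph_def
proof (intro conjI ballI)
  show "finite (verts (path_graph n))" by (simp add: verts_path_graph)
  fix e assume "e \<in> edges (path_graph n)"
  then obtain i where i: "i \<in> {1..n}" "e = {i - 1, i}" by (auto simp: path_graph_def edges_def)
  then show "\<exists>u v. e = {u, v} \<and> u \<noteq> v \<and> u \<in> verts (path_graph n) \<and> v \<in> verts (path_graph n)"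
    by (intro exI[of _ "i - 1"] exI[of _ i]) (auto simp: verts_path_graph)
qed

definition fresh_vertex :: "nat graph \<Rightarrow> nat" where "fresh_vertex G = Suc (Max (verts G))"

lemma verts_add_pendant_path: "verts (add_pendant_path G k x) = verts G \<union> {fresh_vertex G..fresh_vertex G + k}"
  by (simp add: add_pendant_path_def Let_def verts_def fresh_vertex_def)

lemma edges_add_pendant_path: "edges (add_pendant_path G k x) =
   edges G \<union> {{fresh_vertex G + i - 1, fresh_vertex G + i} | i. i \<in> {1..k}} \<union> {{fresh_vertex G + k, x}}"
  by (simp add: add_pendant_path_def Let_def edges_def fresh_vertex_def)

lemma lt_fresh_vertex: "finite (verts G) \<Longrightarrow> a \<in> verts G \<Longrightarrow> a < fresh_vertex G"
  unfolding fresh_vertex_def using Max_ge by (simp add: le_imp_less_Suc)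

lemma add_pendant_path_old_edge_iff:
  assumes wf: "wf_graph G" and x: "x \<in> verts G" and ab: "a \<in> verts G" "b \<in> verts G"
  shows "{a, b} \<in> edges (add_pendant_path G k x) \<longleftrightarrow> {a, b} \<in> edges G"
proof -
  have fin: "finite (verts G)" using wf by (simp add: wf_graph_def)
  have lt: "a < fresh_vertex G" "b < fresh_vertex G" using lt_fresh_vertex[OF fin] ab by auto
  have "{a, b} \<noteq> {fresh_vertex G + i - 1, fresh_vertex G + i}" if "i \<in> {1..k}" for i
    using lt that by (auto simp: doubleton_eq_iff)
  moreover have "{a, b} \<noteq> {fresh_vertex G + k, x}" using lt by (auto simp: doubleton_eq_iff)
  ultimately show ?thesis unfolding edges_add_pendant_path by blast
qed

lemma add_pendant_path_new_edge_iff: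
  assumes wf: "wf_graph G" and x: "x \<in> verts G" and ij: "i \<le> k" "j \<le> k"
  shows "{fresh_vertex G + i, fresh_vertex G + j} \<in> edges (add_pendant_path G k x) \<longleftrightarrow> (j + 1 = i \<or> i + 1 = j)"
proof -
  let ?m = "fresh_vertex G"
  have fin: "finite (verts G)" using wf by (simp add: wf_graph_def)
  have lx: "x < ?m" using lt_fresh_vertex[OF fin x] .
  have notG: "{?m + i, ?m + j} \<notin> edges G"
  proof
    assume "{?m + i, ?m + j} \<in> edges G"
    then have "?m + i \<in> verts G" using wf_graph_edgeD[OF wf] by blast
    then show False using lt_fresh_vertex[OF fin] by fastforce
  qed
  have notx: "{?m + i, ?m + j} \<noteq> {?m + k, x}" using lx by (auto simp: doubleton_eq_iff)
  have "(\<exists>i'\<in>{1..k}. {?m + i, ?m + j} = {?m + i' - 1, ?m + i'}) \<longleftrightarrow> (j + 1 = i \<or> i + 1 = j)"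
  proof
    assume "\<exists>i'\<in>{1..k}. {?m + i, ?m + j} = {?m + i' - 1, ?m + i'}"
    then obtain i' where "i' \<in> {1..k}" "{?m + i, ?m + j} = {?m + i' - 1, ?m + i'}" by blast
    then show "j + 1 = i \<or> i + 1 = j" by (auto simp: doubleton_eq_iff)
  next
    assume "j + 1 = i \<or> i + 1 = j"
    then show "\<exists>i'\<in>{1..k}. {?m + i, ?m + j} = {?m + i' - 1, ?m + i'}"
    proof
      assume "j + 1 = i" then show ?thesis using ij by (intro bexI[of _ i]) (auto simp: insert_commute)
    next
      assume "i + 1 = j" then show ?thesis using ij by (intro bexI[of _ j]) auto
    qed
  qed
  then show ?thesis unfolding edges_add_pendant_path using notG notx by blast
qed

lemma add_pendant_path_link_edge_iff:
  assumes wf: "wf_graph G" and x: "x \<in> verts G" and i: "i \<le> k" and b: "b \<in> verts G"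
  shows "{fresh_vertex G + i, b} \<in> edges (add_pendant_path G k x) \<longleftrightarrow> (i = k \<and> b = x)"
proof -
  let ?m = "fresh_vertex G"
  have fin: "finite (verts G)" using wf by (simp add: wf_graph_def)
  have lb: "b < ?m" using lt_fresh_vertex[OF fin b] .
  have lx: "x < ?m" using lt_fresh_vertex[OF fin x] .
  have notG: "{?m + i, b} \<notin> edges G"
  proof
    assume "{?m + i, b} \<in> edges G"
    then have "?m + i \<in> verts G" using wf_graph_edgeD[OF wf] by blast
    then show False using lt_fresh_vertex[OF fin] by fastforce
  qed
  have np: "{?m + i, b} \<noteq> {?m + i' - 1, ?m + i'}" if "i' \<in> {1..k}" for i'
    using lb that by (auto simp: doubleton_eq_iff)
  have "{?m + i, b} = {?m + k, x} \<longleftrightarrow> (i = k \<and> b = x)" using lb lx by (auto simp: doubleton_eq_iff)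
  then show ?thesis unfolding edges_add_pendant_path using notG np by blast
qed

lemma wf_graph_add_pendant_path:
  assumes wf: "wf_graph G" and x: "x \<in> verts G"
  shows "wf_graph (add_pendant_path G k x)"
proof -
  let ?m = "fresh_vertex G"
  have fin: "finite (verts G)" using wf by (simp add: wf_graph_def)
  have lx: "x < ?m" using lt_fresh_vertex[OF fin x] .
  show ?thesis unfolding wf_graph_def
  proof (intro conjI ballI)
    show "finite (verts (add_pendant_path G k x))" using fin by (simp add: verts_add_pendant_path)
    fix e assume "e \<in> edges (add_pendant_path G k x)"
    then consider "e \<in> edges G" | i where "i \<in> {1..k}" "e = {?m + i - 1, ?m + i}" | "e = {?m + k, x}"
      unfolding edges_add_pendant_path by blast
    then show "\<exists>u v. e = {u, v} \<and> u \<noteq> v \<and> u \<in> verts (add_pendant_path G k x) \<and> v \<in> verts (add_pendant_path G k x)"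
    proof cases
      case 1 then show ?thesis using wf unfolding wf_graph_def verts_add_pendant_path by blast
    next
      case 2 then show ?thesis by (intro exI[of _ "?m + i - 1"] exI[of _ "?m + i"]) (auto simp: verts_add_pendant_path)
    next
      case 3 then show ?thesis using lx x by (intro exI[of _ "?m + k"] exI[of _ x]) (auto simp: verts_add_pendant_path)
    qed
  qed
qed

lemma wf_graph_opO: assumes "wf_graph G" shows "wf_graph (opO G v)"
proof (cases "vheight G v = 0")
  case False
  then obtain n where "reach_leaf G v n" unfolding vheight_eq_Least by (auto split: if_splits)
  then have "v \<in> verts G" by (rule reach_leaf_in_verts)
  then show ?thesis using assms wf_graph_add_pendant_path unfolding opO_def by simp
qed (use assms in \<open>simp add: opO_def\<close>)

lemma wf_graph_opO_seq: "wf_graph G \<Longrightarrow> wf_graph (opO_seq G vs)"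
  by (induction vs arbitrary: G) (simp_all add: wf_graph_opO)

lemma opO_seq_snoc: "opO_seq G (vs @ [v]) = opO (opO_seq G vs) v"
  by (induction vs arbitrary: G) simp_all

lemma valid_O_seq_snoc: "valid_O_seq G (vs @ [v]) \<longleftrightarrow>
   valid_O_seq G vs \<and> v \<in> verts (opO_seq G vs) \<and> vheight (opO_seq G vs) v \<in> {1, 2, 3}"
  by (induction vs arbitrary: G) auto

text \<open>\<open>p 0, \<dots>, p k\<close> is a path joined to the rest of \<open>G\<close> only by the edge \<open>{p k, v}\<close>: a copy of
  \<open>P\<^sub>k\<close> attached at its vertex \<open>k\<close> to \<open>v\<close>, as in the operation \<open>\<O>\<close>.\<close>

definition pendant_path :: "'a graph \<Rightarrow> (nat \<Rightarrow> 'a) \<Rightarrow> nat \<Rightarrow> 'a \<Rightarrow> bool" where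
  "pendant_path G p k v \<longleftrightarrow> inj_on p {0..k} \<and> p ` {0..k} \<subseteq> verts G \<and> v \<in> verts G \<and> v \<notin> p ` {0..k} \<and>
     (\<forall>i\<le>k. nbhd G (p i) = {p j |j. j \<le> k \<and> (j + 1 = i \<or> i + 1 = j)} \<union> (if i = k then {v} else {}))"

lemma path_nbrs_eq:
  "{p j |j. j \<le> k \<and> (j + 1 = i \<or> i + 1 = j)} =
   (if 0 < i \<and> i \<le> Suc k then {p (i - 1)} else {}) \<union> (if i < k then {p (Suc i)} else {})"
proof -
  have "{p j |j. j \<le> k \<and> (j + 1 = i \<or> i + 1 = j)} = p ` {j. j \<le> k \<and> (j + 1 = i \<or> i + 1 = j)}"
    by blast
  also have "{j. j \<le> k \<and> (j + 1 = i \<or> i + 1 = j)} =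
     (if 0 < i \<and> i \<le> Suc k then {i - 1} else {}) \<union> (if i < k then {Suc i} else {})" by auto
  finally show ?thesis by auto
qed

lemma pendant_pathI:
  assumes "inj_on p {0..k}" "p ` {0..k} \<subseteq> verts G" "v \<in> verts G" "v \<notin> p ` {0..k}"
    and "\<And>i. i \<le> k \<Longrightarrow> nbhd G (p i) =
      (if 0 < i then {p (i - 1)} else {}) \<union> (if i < k then {p (Suc i)} else {}) \<union> (if i = k then {v} else {})"
  shows "pendant_path G p k v"
  unfolding pendant_path_def
proof (intro conjI allI impI)
  fix i assume i: "i \<le> k"
  show "nbhd G (p i) = {p j |j. j \<le> k \<and> (j + 1 = i \<or> i + 1 = j)} \<union> (if i = k then {v} else {})"
    unfolding path_nbrs_eq using assms(5)[OF i] i by simp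
qed (use assms(1-4) in auto)

lemma pendant_path_nbhd_subset:
  assumes "pendant_path G p k v" "q \<in> p ` {0..k}" shows "nbhd G q \<subseteq> p ` {0..k} \<union> {v}"
proof -
  obtain i where "i \<le> k" "q = p i" using assms(2) by auto
  then show ?thesis using assms(1) unfolding pendant_path_def by auto
qed

lemma pendant_path_edge_iff:
  assumes wf: "wf_graph G" and pp: "pendant_path G p k v" and i: "i \<le> k" and b: "b \<in> verts G"
  shows "{p i, b} \<in> edges G \<longleftrightarrow> (\<exists>j\<le>k. b = p j \<and> (j + 1 = i \<or> i + 1 = j)) \<or> (i = k \<and> b = v)"
proof -
  have "p i \<in> verts G" using pp i unfolding pendant_path_def by auto
  then have "{p i, b} \<in> edges G \<longleftrightarrow> b \<in> nbhd G (p i)"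
    using edge_iff_nbhd[OF wf, of "p i" b] by (simp add: insert_commute)
  then show ?thesis using pp i unfolding pendant_path_def by auto
qed

lemma bij_betw_extend_by_path:
  fixes m k :: nat
  assumes f: "bij_betw f (A - p ` {0..k}) B" and p: "inj_on p {0..k}" "p ` {0..k} \<subseteq> A"
    and disjoint: "B \<inter> {m..m + k} = {}"
  shows "bij_betw (\<lambda>x. if x \<in> p ` {0..k} then m + the_inv_into {0..k} p x else f x) A (B \<union> {m..m + k})"
proof -
  let ?f' = "\<lambda>x. if x \<in> p ` {0..k} then m + the_inv_into {0..k} p x else f x"
  have "bij_betw ?f' (A - p ` {0..k}) B"
    using f by (rule bij_betw_cong[THEN iffD1, rotated]) simp
  moreover have "bij_betw ?f' (p ` {0..k}) {m..m + k}"
  proof -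
    have "bij_betw (\<lambda>i. m + i) {0..k} {m..m + k}"
      unfolding bij_betw_def inj_on_def by (auto simp: image_iff intro: bexI[of _ "_ - m"])
    moreover have "bij_betw (the_inv_into {0..k} p) (p ` {0..k}) {0..k}"
      using bij_betw_the_inv_into[OF inj_on_imp_bij_betw[OF p(1)]] .
    ultimately have "bij_betw ((\<lambda>i. m + i) \<circ> the_inv_into {0..k} p) (p ` {0..k}) {m..m + k}"
      using bij_betw_trans by blast
    then show ?thesis by (rule bij_betw_cong[THEN iffD1, rotated]) simp
  qed
  ultimately have "bij_betw ?f' ((A - p ` {0..k}) \<union> p ` {0..k}) (B \<union> {m..m + k})"
    using disjoint by (rule bij_betw_combine)
  moreover have "(A - p ` {0..k}) \<union> p ` {0..k} = A" using p(2) by blast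
  ultimately show ?thesis by simp
qed

text \<open>The isomorphism is extended by sending \<open>p i\<close> to the \<open>i\<close>-th new vertex.\<close>

lemma graph_iso_add_pendant_path:
  assumes wfT: "wf_graph T" and wfG: "wf_graph G"
    and iso: "iso_map (delete_verts T (p ` {0..k})) G f" and pp: "pendant_path T p k v"
  shows "graph_iso T (add_pendant_path G k (f v))"
proof -
  define P where "P = p ` {0..k}"
  define m where "m = fresh_vertex G"
  define f' where "f' x = (if x \<in> P then m + the_inv_into {0..k} p x else f x)" for x
  let ?H = "add_pendant_path G k (f v)"
  have injp: "inj_on p {0..k}" and PV: "P \<subseteq> verts T" and v: "v \<in> verts T - P"
    using pp unfolding pendant_path_def P_def by auto
  have f'_p: "f' (p i) = m + i" if "i \<le> k" for i
    using the_inv_into_f_f[OF injp] that unfolding f'_def P_def by auto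
  have bf: "bij_betw f (verts T - P) (verts G)"
    and ef: "\<forall>a\<in>verts T - P. \<forall>b\<in>verts T - P. {a, b} \<in> edges (delete_verts T P) \<longleftrightarrow> {f a, f b} \<in> edges G"
    using iso unfolding iso_map_def P_def by auto
  have fG: "f a \<in> verts G" if "a \<in> verts T - P" for a using bf that bij_betwE by blast
  have finj: "f a = f b \<longleftrightarrow> a = b" if "a \<in> verts T - P" "b \<in> verts T - P" for a b
    using bf that unfolding bij_betw_def inj_on_def by blast
  have "verts G \<inter> {m..m + k} = {}"
    using lt_fresh_vertex[of G] wfG m_def by (fastforce simp: wf_graph_def)
  then have "bij_betw f' (verts T) (verts G \<union> {m..m + k})"
    using bij_betw_extend_by_path[OF bf[unfolded P_def] injp PV[unfolded P_def]]
    unfolding f'_def P_def by (simp add: fun_eq_iff)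
  then have bij: "bij_betw f' (verts T) (verts ?H)" by (simp add: verts_add_pendant_path m_def)
  have fv: "f v \<in> verts G" using fG v .
  have path_path: "{p i, p j} \<in> edges T \<longleftrightarrow> {f' (p i), f' (p j)} \<in> edges ?H"
    if "i \<le> k" "j \<le> k" for i j
  proof -
    have "p j \<noteq> v" and inj: "\<And>j'. j' \<le> k \<Longrightarrow> p j = p j' \<longleftrightarrow> j = j'"
      using v that injp unfolding P_def inj_on_def by auto
    have "p j \<in> verts T" using PV that(2) unfolding P_def by auto
    then have "{p i, p j} \<in> edges T \<longleftrightarrow>
        (\<exists>j'\<le>k. p j = p j' \<and> (j' + 1 = i \<or> i + 1 = j')) \<or> (i = k \<and> p j = v)"
      by (rule pendant_path_edge_iff[OF wfT pp that(1)])
    also have "\<dots> \<longleftrightarrow> j + 1 = i \<or> i + 1 = j" using \<open>p j \<noteq> v\<close> inj that(2) by blast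
    finally have "{p i, p j} \<in> edges T \<longleftrightarrow> j + 1 = i \<or> i + 1 = j" .
    then show ?thesis
      using add_pendant_path_new_edge_iff[OF wfG fv that] f'_p that m_def by simp
  qed
  have path_rest: "{p i, b} \<in> edges T \<longleftrightarrow> {f' (p i), f' b} \<in> edges ?H"
    if "i \<le> k" "b \<in> verts T - P" for i b
  proof -
    have "{p i, b} \<in> edges T \<longleftrightarrow> i = k \<and> b = v"
      using pendant_path_edge_iff[OF wfT pp that(1)] that(2) unfolding P_def by auto
    moreover have "f' b = f b" using that(2) unfolding f'_def by simp
    ultimately show ?thesis
      using add_pendant_path_link_edge_iff[OF wfG fv that(1) fG[OF that(2)]] f'_p[OF that(1)]
        finj[OF that(2) v] m_def by auto
  qed
  have rest_rest: "{a, b} \<in> edges T \<longleftrightarrow> {f' a, f' b} \<in> edges ?H"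
    if "a \<in> verts T - P" "b \<in> verts T - P" for a b
  proof -
    have "{a, b} \<in> edges T \<longleftrightarrow> {f a, f b} \<in> edges G" using ef that by auto
    then show ?thesis
      using add_pendant_path_old_edge_iff[OF wfG fv fG[OF that(1)] fG[OF that(2)]] that
      unfolding f'_def by simp
  qed
  have "{a, b} \<in> edges T \<longleftrightarrow> {f' a, f' b} \<in> edges ?H" if "a \<in> verts T" "b \<in> verts T" for a b
  proof (cases "a \<in> P"; cases "b \<in> P")
    assume "a \<in> P" "b \<in> P"
    then show ?thesis using path_path unfolding P_def by auto
  next
    assume "a \<in> P" "b \<notin> P"
    then show ?thesis using path_rest that unfolding P_def by auto
  next
    assume "a \<notin> P" "b \<in> P"
    then show ?thesis using path_rest[of _ a] that unfolding P_def by (auto simp: insert_commute)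
  next
    assume "a \<notin> P" "b \<notin> P"
    then show ?thesis using rest_rest that by simp
  qed
  then show ?thesis unfolding graph_iso_def using bij by blast
qed

definition O_generated :: "'a graph \<Rightarrow> bool" where
  "O_generated T \<longleftrightarrow> (\<exists>vs. valid_O_seq (path_graph 6) vs \<and> graph_iso T (opO_seq (path_graph 6) vs))"

lemma (in height3_tree) O_generated_if_pendant_path:
  assumes pp: "pendant_path T p k v"
    and k: "(k = 0 \<and> h v = 1) \<or> (k = 3 \<and> h v = 2) \<or> (k = 2 \<and> h v = 3)"
    and two: "\<exists>a b. a \<noteq> b \<and> a \<in> N v - p ` {0..k} \<and> b \<in> N v - p ` {0..k}"
    and lower: "\<exists>y\<in>N v - p ` {0..k}. Suc (h y) = h v"
    and generated: "O_generated (delete_verts T (p ` {0..k}))"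
  shows "O_generated T"
proof -
  let ?P = "p ` {0..k}"
  have P: "?P \<subseteq> V" "v \<in> V" "v \<notin> ?P" "\<And>q. q \<in> ?P \<Longrightarrow> N q \<subseteq> ?P \<union> {v}"
    using pp pendant_path_nbhd_subset[OF pp] unfolding pendant_path_def by auto
  obtain vs where vs: "valid_O_seq (path_graph 6) vs"
    and "graph_iso (delete_verts T ?P) (opO_seq (path_graph 6) vs)"
    using generated unfolding O_generated_def by blast
  moreover define G where "G = opO_seq (path_graph 6) vs"
  ultimately obtain f where f: "iso_map (delete_verts T ?P) G f" using graph_iso_iff_iso_map by blast
  have wfG: "wf_graph G" unfolding G_def by (rule wf_graph_opO_seq[OF wf_graph_path_graph])
  have v': "v \<in> verts (delete_verts T ?P)" using P by simp
  have "vheight G (f v) = h v"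
    using iso_map_vheight[OF f v'] vheight_delete_pendant[OF P two lower] P by simp
  moreover have "f v \<in> verts G" using f v' unfolding iso_map_def by (meson bij_betwE)
  ultimately have "valid_O_seq (path_graph 6) (vs @ [f v])"
    and "opO_seq (path_graph 6) (vs @ [f v]) = add_pendant_path G k (f v)"
    using vs k unfolding G_def by (auto simp: valid_O_seq_snoc opO_seq_snoc opO_def)
  moreover have "graph_iso T (add_pendant_path G k (f v))"
    by (rule graph_iso_add_pendant_path[OF wf wfG f pp])
  ultimately show ?thesis unfolding O_generated_def by metis
qed

lemma (in matched_height3_tree) O_generated_by_pendant_path:
  assumes IH: "\<And>P. P \<noteq> {} \<Longrightarrow> P \<subseteq> V \<Longrightarrow> matched_height3_tree (delete_verts T P) \<Longrightarrow>
      O_generated (delete_verts T P)"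
    and pp: "pendant_path T p k v"
    and k: "(k = 0 \<and> h v = 1) \<or> (k = 3 \<and> h v = 2) \<or> (k = 2 \<and> h v = 3)"
    and two: "\<exists>a b. a \<noteq> b \<and> a \<in> N v - p ` {0..k} \<and> b \<in> N v - p ` {0..k}"
    and lower: "\<exists>y\<in>N v - p ` {0..k}. Suc (h y) = h v"
    and height3: "\<exists>x\<in>V - p ` {0..k}. h x = 3"
  shows "O_generated T"
proof (rule O_generated_if_pendant_path[OF pp k two lower IH])
  have P: "p ` {0..k} \<subseteq> V" "v \<in> V" "v \<notin> p ` {0..k}"
    using pp unfolding pendant_path_def by blast+
  then show "p ` {0..k} \<subseteq> V" by blast
  show "p ` {0..k} \<noteq> {}" by simp
  show "matched_height3_tree (delete_verts T (p ` {0..k}))"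
    by (rule matched_delete_pendant[OF P pendant_path_nbhd_subset[OF pp] two lower height3])
qed

section \<open>Reduction to \<open>P\<^sub>6\<close>\<close>

context height3_tree
begin

text \<open>Otherwise the vertices of height 2 and 3 would span a subgraph of minimum degree two.\<close>

lemma height2_with_unique_height3_nbr:
  obtains w where "w \<in> V" "h w = 2" "\<And>a b. a \<in> N w \<Longrightarrow> b \<in> N w \<Longrightarrow> h a = 3 \<Longrightarrow> h b = 3 \<Longrightarrow> a = b"
proof -
  have "\<exists>w. w \<in> V \<and> h w = 2 \<and> (\<forall>a b. a \<in> N w \<longrightarrow> b \<in> N w \<longrightarrow> h a = 3 \<longrightarrow> h b = 3 \<longrightarrow> a = b)"
  proof (rule ccontr)
    assume "\<not> ?thesis"
    then have two3: "\<exists>a b. a \<noteq> b \<and> a \<in> N w \<and> b \<in> N w \<and> h a = 3 \<and> h b = 3"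
      if "w \<in> V" "h w = 2" for w
      using that by blast
    define S where "S = {x \<in> V. h x = 2 \<or> h x = 3}"
    have "has_cycle T"
    proof (rule has_cycle_if_min_degree_two[OF wf])
      show "finite S" "S \<subseteq> V" using finite_V unfolding S_def by auto
      show "S \<noteq> {}" using height3_exists unfolding S_def by auto
      fix x assume "x \<in> S"
      then have x: "x \<in> V" "h x = 2 \<or> h x = 3" unfolding S_def by auto
      show "\<exists>a b. a \<noteq> b \<and> a \<in> N x \<inter> S \<and> b \<in> N x \<inter> S"
      proof (cases "h x = 2")
        case True
        then show ?thesis using two3[OF x(1)] nbr_in_V unfolding S_def by blast
      next
        case False
        then have "h x = 3" using x by simp
        moreover obtain a b where "a \<noteq> b" "a \<in> N x" "b \<in> N x" using two_nbrs[OF x(1)] x(2) by auto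
        ultimately show ?thesis using height3_nbr nbr_in_V unfolding S_def by blast
      qed
    qed
    then show False using acyclic by blast
  qed
  then show thesis using that by blast
qed

lemma graph_iso_path6:
  assumes N: "N l = {s}" "N s = {l, w}" "N w = {s, u}" "N u = {w, w'}"
    "N l' = {s'}" "N s' = {l', w'}" "N w' = {s', u}"
    and dist: "distinct [l, s, w, u, w', s', l']"
  shows "graph_iso T (path_graph 6)"
proof -
  define xs where "xs = [l, s, w, u, w', s', l']"
  define g where "g i = xs ! i" for i
  have "N x \<noteq> {}" if "x \<in> set xs" for x using that N unfolding xs_def by auto
  then have "set xs \<subseteq> V" using nbr_in_V by blast
  then have "set xs = V" using N unfolding xs_def by (intro nbhd_closed_eq) auto
  moreover have "bij_betw ((!) xs) {..<length xs} (set xs)" using bij_betw_nth[of xs] dist xs_def by simp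
  moreover have "{..<length xs} = {0..6::nat}" unfolding xs_def by auto
  ultimately have b: "bij_betw g {0..6} V" unfolding g_def by (simp add: fun_eq_iff)
  have edge: "{i, j} \<in> edges (path_graph 6) \<longleftrightarrow> {g i, g j} \<in> edges T"
    if ij: "i \<in> {0..6}" "j \<in> {0..6}" for i j
  proof -
    have "{g i, g j} \<in> edges T \<longleftrightarrow> g i \<in> N (g j)"
      using edge_iff_nbhd[OF wf bij_betwE[OF b, rule_format, OF ij(2)]] .
    moreover have "{i, j} \<in> edges (path_graph 6) \<longleftrightarrow> (i = Suc j \<or> j = Suc i)"
      using edges_path_graph_iff ij by auto
    moreover have "g i \<in> N (g j) \<longleftrightarrow> (i = Suc j \<or> j = Suc i)"
    proof -
      have i7: "i = 0 \<or> i = 1 \<or> i = 2 \<or> i = 3 \<or> i = 4 \<or> i = 5 \<or> i = 6"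
        and j7: "j = 0 \<or> j = 1 \<or> j = 2 \<or> j = 3 \<or> j = 4 \<or> j = 5 \<or> j = 6" using ij by auto
      have d: "l \<noteq> s" "l \<noteq> w" "l \<noteq> u" "l \<noteq> w'" "l \<noteq> s'" "l \<noteq> l'"
        "s \<noteq> w" "s \<noteq> u" "s \<noteq> w'" "s \<noteq> s'" "s \<noteq> l'" "w \<noteq> u" "w \<noteq> w'" "w \<noteq> s'" "w \<noteq> l'"
        "u \<noteq> w'" "u \<noteq> s'" "u \<noteq> l'" "w' \<noteq> s'" "w' \<noteq> l'" "s' \<noteq> l'" using dist by auto
      note d' = d d[symmetric]
      show ?thesis using i7 j7 unfolding g_def xs_def
        by (elim disjE) (simp_all add: N d')
    qed
    ultimately show ?thesis by simp
  qed
  have "iso_map (path_graph 6) T g" unfolding iso_map_def verts_path_graph using b edge by blast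
  then show ?thesis using iso_map_inv graph_iso_iff_iso_map by blast
qed

end

context matched_height3_tree
begin

lemma leaf_end_of_height2:
  assumes one_leaf: "\<And>s l l'. h s = 1 \<Longrightarrow> l \<in> N s \<Longrightarrow> l' \<in> N s \<Longrightarrow> leaf T l \<Longrightarrow> leaf T l' \<Longrightarrow> l = l'"
    and w: "w \<in> V" "h w = 2" and u: "u \<in> N w" "h u = 3"
    and unique: "\<And>u'. u' \<in> N w \<Longrightarrow> h u' = 3 \<Longrightarrow> u' = u"
  obtains s l where "N l = {s}" "N s = {l, w}" "N w = {s, u}" "h s = 1" "leaf T l"
proof -
  obtain s where s: "s \<in> N w" "h s = 1" using height_descend[OF w(1)] w(2) by force
  have sV: "s \<in> V" using nbr_in_V s(1) by blast
  obtain l where l: "l \<in> N s" "leaf T l" using height1_leaf_nbr[OF sV s(2)] by blast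
  have "N s = {l, w}"
  proof
    show "N s \<subseteq> {l, w}"
    proof
      fix x assume x: "x \<in> N s"
      have "h x = 0 \<or> h x = 2" using height1_nbr[OF s(2) x] .
      then show "x \<in> {l, w}"
      proof
        assume "h x = 0"
        then have "leaf T x" using height0_iff_leaf nbr_in_V x by blast
        then show ?thesis using one_leaf[OF s(2) x l(1)] l(2) by blast
      next
        assume "h x = 2"
        then show ?thesis using height1_unique_height2[OF s(2) x nbr_sym[OF s(1)]] w(2) by blast
      qed
    qed
    show "{l, w} \<subseteq> N s" using l(1) nbr_sym[OF s(1)] by blast
  qed
  moreover have "N w = {s, u}"
  proof
    show "N w \<subseteq> {s, u}"
    proof
      fix x assume x: "x \<in> N w"
      have "h x = 1 \<or> h x = 3" using height2_nbr[OF w(2) x] .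
      then show "x \<in> {s, u}"
        using height2_unique_height1[OF w(2) x s(1)] s(2) unique[OF x] by blast
    qed
    show "{s, u} \<subseteq> N w" using s(1) u(1) by blast
  qed
  ultimately show thesis using that leaf_nbhd_eq[OF l(2,1)] s(2) l(2) by blast
qed

lemma O_generated_if_twin_leaves:
  assumes IH: "\<And>P. P \<noteq> {} \<Longrightarrow> P \<subseteq> V \<Longrightarrow> matched_height3_tree (delete_verts T P) \<Longrightarrow>
      O_generated (delete_verts T P)"
    and s: "h s = 1" and l: "l \<noteq> l'" "l \<in> N s" "l' \<in> N s" "leaf T l" "leaf T l'"
  shows "O_generated T"
proof (rule O_generated_by_pendant_path[OF IH, where p = "(!) [l]" and k = 0 and v = s])
  have sV: "s \<in> V" using nbr_in_V l(2) by blast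
  obtain w where w: "w \<in> N s" "h w = 2" using height1_height2_nbr[OF sV s] by blast
  have h0: "h l = 0" "h l' = 0" using leaf_height0 l(4,5) by auto
  have P: "(!) [l] ` {0..0} = {l}" by simp
  show "pendant_path T ((!) [l]) 0 s"
    by (rule pendant_pathI) (use sV nbr_in_V[OF l(2)] nbr_neq[OF l(2)] leaf_nbhd_eq[OF l(4,2)] in auto)
  show "0 = 0 \<and> h s = 1 \<or> 0 = 3 \<and> h s = 2 \<or> 0 = 2 \<and> h s = 3" using s by simp
  show "\<exists>a b. a \<noteq> b \<and> a \<in> N s - (!) [l] ` {0..0} \<and> b \<in> N s - (!) [l] ` {0..0}"
    using l w h0 unfolding P by (intro exI[of _ l'] exI[of _ w]) auto
  show "\<exists>y\<in>N s - (!) [l] ` {0..0}. Suc (h y) = h s" using l h0 s unfolding P by auto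
  show "\<exists>x\<in>V - (!) [l] ` {0..0}. h x = 3" using height3_exists h0 unfolding P by auto
qed

lemma O_generated_if_branching_height3:
  assumes IH: "\<And>P. P \<noteq> {} \<Longrightarrow> P \<subseteq> V \<Longrightarrow> matched_height3_tree (delete_verts T P) \<Longrightarrow>
      O_generated (delete_verts T P)"
    and N: "N l = {s}" "N s = {l, w}" "N w = {s, u}" and h: "h s = 1" "h u = 3" "leaf T l"
    and ab: "a \<noteq> b" "a \<in> N u - {w}" "b \<in> N u - {w}"
  shows "O_generated T"
proof (rule O_generated_by_pendant_path[OF IH, where p = "(!) [l, s, w]" and k = 2 and v = u])
  have "{0..2::nat} = {0, 1, 2}" by auto
  then have P: "(!) [l, s, w] ` {0..2} = {l, s, w}" by simp
  have hw: "h w = 2" using height3_nbr[OF h(2)] nbr_sym N(3) by blast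
  have hab: "h a = 2" "h b = 2" using height3_nbr[OF h(2)] ab by auto
  have V: "{l, s, w, u} \<subseteq> V" using nbr_in_V[of s l] nbr_in_V[of u w] N by auto
  have dist: "distinct [l, s, w, u]" using leaf_height0[OF h(3)] h hw by auto
  show "pendant_path T ((!) [l, s, w]) 2 u"
  proof (rule pendant_pathI)
    show "inj_on ((!) [l, s, w]) {0..2}" using dist by (intro inj_on_nth) auto
    fix i :: nat assume "i \<le> 2"
    then have "i = 0 \<or> i = 1 \<or> i = 2" by auto
    then show "N ([l, s, w] ! i) = (if 0 < i then {[l, s, w] ! (i - 1)} else {})
        \<union> (if i < 2 then {[l, s, w] ! Suc i} else {}) \<union> (if i = 2 then {u} else {})"
      using N by (auto simp: insert_commute)
  qed (use P V dist in auto)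
  show "2 = 0 \<and> h u = 1 \<or> 2 = 3 \<and> h u = 2 \<or> 2 = 2 \<and> h u = 3" using h by simp
  show "\<exists>a b. a \<noteq> b \<and> a \<in> N u - (!) [l, s, w] ` {0..2} \<and> b \<in> N u - (!) [l, s, w] ` {0..2}"
    using ab hab leaf_height0[OF h(3)] h unfolding P by (intro exI[of _ a] exI[of _ b]) auto
  show "\<exists>y\<in>N u - (!) [l, s, w] ` {0..2}. Suc (h y) = h u"
    using ab hab leaf_height0[OF h(3)] h unfolding P by (intro bexI[of _ a]) auto
  show "\<exists>x\<in>V - (!) [l, s, w] ` {0..2}. h x = 3" using V dist h unfolding P by auto
qed

lemma O_generated_if_height2_between_height3:
  assumes IH: "\<And>P. P \<noteq> {} \<Longrightarrow> P \<subseteq> V \<Longrightarrow> matched_height3_tree (delete_verts T P) \<Longrightarrow>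
      O_generated (delete_verts T P)"
    and N: "N l = {s}" "N s = {l, w}" "N w = {s, u}" "N u = {w, w'}"
    and h: "h s = 1" "h u = 3" "leaf T l"
    and w': "w' \<noteq> w" and u': "u' \<in> N w'" "u' \<noteq> u" "h u' = 3"
  shows "O_generated T"
proof (rule O_generated_by_pendant_path[OF IH, where p = "(!) [l, s, w, u]" and k = 3 and v = w'])
  have "{0..3::nat} = {0, 1, 2, 3}" by auto
  then have P: "(!) [l, s, w, u] ` {0..3} = {l, s, w, u}" by simp
  have hw: "h w = 2" "h w' = 2" using height3_nbr[OF h(2)] N(4) by auto
  have w'V: "w' \<in> V" using nbr_in_V[of w' u] N(4) by auto
  have V: "{l, s, w, u} \<subseteq> V" using nbr_in_V[of s l] nbr_in_V[of u w] N by auto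
  have dist: "distinct [l, s, w, u]" using leaf_height0[OF h(3)] h hw by auto
  obtain s' where s': "s' \<in> N w'" "h s' = 1" using height_descend[OF w'V] hw(2) by force
  have "s' \<noteq> s" using s' N(2) w' hw leaf_height0[OF h(3)] nbr_sym[OF s'(1)] by auto
  then have out: "s' \<notin> {l, s, w, u}" "u' \<notin> {l, s, w, u}"
    using s' u' hw leaf_height0[OF h(3)] h by auto
  show "pendant_path T ((!) [l, s, w, u]) 3 w'"
  proof (rule pendant_pathI)
    show "inj_on ((!) [l, s, w, u]) {0..3}" using dist by (intro inj_on_nth) auto
    have "w' \<notin> {l, s, w, u}" using hw leaf_height0[OF h(3)] h w' by auto
    with P V w'V show "(!) [l, s, w, u] ` {0..3} \<subseteq> V" "w' \<in> V" "w' \<notin> (!) [l, s, w, u] ` {0..3}"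
      by auto
    fix i :: nat assume "i \<le> 3"
    then have "i = 0 \<or> i = 1 \<or> i = 2 \<or> i = 3" by auto
    then show "N ([l, s, w, u] ! i) = (if 0 < i then {[l, s, w, u] ! (i - 1)} else {})
        \<union> (if i < 3 then {[l, s, w, u] ! Suc i} else {}) \<union> (if i = 3 then {w'} else {})"
      using N by (auto simp: insert_commute)
  qed
  show "3 = 0 \<and> h w' = 1 \<or> 3 = 3 \<and> h w' = 2 \<or> 3 = 2 \<and> h w' = 3" using hw by simp
  show "\<exists>a b. a \<noteq> b \<and> a \<in> N w' - (!) [l, s, w, u] ` {0..3} \<and> b \<in> N w' - (!) [l, s, w, u] ` {0..3}"
    using s' u' out unfolding P by (intro exI[of _ s'] exI[of _ u']) auto
  show "\<exists>y\<in>N w' - (!) [l, s, w, u] ` {0..3}. Suc (h y) = h w'"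
    using s' out hw unfolding P by (intro bexI[of _ s']) auto
  show "\<exists>x\<in>V - (!) [l, s, w, u] ` {0..3}. h x = 3"
    using u' out nbr_in_V[of u' w'] unfolding P by auto
qed

lemma O_generated_step:
  assumes IH: "\<And>P. P \<noteq> {} \<Longrightarrow> P \<subseteq> V \<Longrightarrow> matched_height3_tree (delete_verts T P) \<Longrightarrow>
      O_generated (delete_verts T P)"
  shows "O_generated T"
proof (cases "\<exists>s l l'. h s = 1 \<and> l \<noteq> l' \<and> l \<in> N s \<and> l' \<in> N s \<and> leaf T l \<and> leaf T l'")
  case True
  then show ?thesis using O_generated_if_twin_leaves[OF IH] by blast
next
  case False
  then have one_leaf: "l = l'" if "h s = 1" "l \<in> N s" "l' \<in> N s" "leaf T l" "leaf T l'" for s l l'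
    using that by blast
  obtain w where w: "w \<in> V" "h w = 2" and unique3: "\<And>a b. a \<in> N w \<Longrightarrow> b \<in> N w \<Longrightarrow> h a = 3 \<Longrightarrow> h b = 3 \<Longrightarrow> a = b"
    using height2_with_unique_height3_nbr by blast
  obtain u where u: "u \<in> N w" "h u = 3"
    using height2_height3_nbr[OF w] height2_unique_height1[OF w(2)] by blast
  obtain s l where sl: "N l = {s}" "N s = {l, w}" "N w = {s, u}" "h s = 1" "leaf T l"
    by (rule leaf_end_of_height2[where w = w and u = u]) (use one_leaf w u unique3 in blast)+
  show ?thesis
  proof (cases "\<exists>a b. a \<noteq> b \<and> a \<in> N u - {w} \<and> b \<in> N u - {w}")
    case True
    then show ?thesis using O_generated_if_branching_height3[OF IH sl(1-3) sl(4) u(2) sl(5)] by blast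
  next
    case False
    obtain a b where "a \<noteq> b" "a \<in> N u" "b \<in> N u" using two_nbrs[of u] u nbr_in_V by auto
    then obtain w' where w': "w' \<in> N u" "w' \<noteq> w" by blast
    then have Nu: "N u = {w, w'}" using False nbr_sym[OF u(1)] by blast
    show ?thesis
    proof (cases "\<exists>u'\<in>N w'. u' \<noteq> u \<and> h u' = 3")
      case True
      then show ?thesis
        using O_generated_if_height2_between_height3[OF IH sl(1-3) Nu sl(4) u(2) sl(5) w'(2)] by blast
    next
      case False
      have hw': "h w' = 2" using height3_nbr[OF u(2) w'(1)] .
      obtain s' l' where sl': "N l' = {s'}" "N s' = {l', w'}" "N w' = {s', u}" "h s' = 1" "leaf T l'"
        by (rule leaf_end_of_height2[where w = w' and u = u])
          (use one_leaf hw' nbr_sym[OF w'(1)] u(2) False nbr_in_V[OF w'(1)] in blast)+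
      have "s' \<noteq> s"
      proof
        assume "s' = s"
        then have "w' \<in> {l, w}" using sl(2) sl'(2) by auto
        then show False using w'(2) hw' leaf_height0[OF sl(5)] by auto
      qed
      then have "distinct [l, s, w, u, w', s', l']"
        using sl sl' w w'(2) hw' u(2) leaf_height0[OF sl(5)] leaf_height0[OF sl'(5)] by auto
      then have "graph_iso T (path_graph 6)" using graph_iso_path6 sl(1-3) Nu sl'(1-3) by blast
      then show ?thesis unfolding O_generated_def by (intro exI[of _ "[]"]) simp
    qed
  qed
qed

end

lemma matched_height3_tree_O_generated: "matched_height3_tree T \<Longrightarrow> O_generated T"
proof (induction "card (verts T)" arbitrary: T rule: less_induct)
  case less
  interpret matched_height3_tree T by (rule less.prems)
  show ?case
  proof (rule O_generated_step)
    fix P assume P: "P \<noteq> {}" "P \<subseteq> V" "matched_height3_tree (delete_verts T P)"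
    then have "card (verts (delete_verts T P)) < card V" using finite_V by (auto intro: psubset_card_mono)
    then show "O_generated (delete_verts T P)" using less.hyps P(3) by blast
  qed
qed

theorem theorem3p54:
  fixes T :: "'a graph"
  assumes "balanced_tree T" and "unmixed T" and "gheight T = 3"
  shows "graph_iso T (path_graph 6) \<or>
         (\<exists>vs. vs \<noteq> [] \<and> valid_O_seq (path_graph 6) vs \<and>
               graph_iso T (opO_seq (path_graph 6) vs))"
proof -
  interpret height3_tree T by (rule balanced_tree_height3_tree[OF assms(1,3)])
  have "O_generated T" by (rule matched_height3_tree_O_generated[OF matched_if_unmixed[OF assms(2)]])
  then obtain vs where "valid_O_seq (path_graph 6) vs" "graph_iso T (opO_seq (path_graph 6) vs)"
    unfolding O_generated_def by blast
  then show ?thesis by (cases vs) auto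
qed

end
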